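(* Let $G$ be a connected locally finite quasi-transitive graph with exactly $2$ ends. Then $G$ has a periodic proper vertex-coloring with $\chi(G)$ colors.
   Context: A graph is locally finite if every vertex has finite degree. A graph $G$ is quasi-transitive if $V(G)$ has finitely many orbits under the action of its automorphism group $\mathrm{Aut}(G)$. A ray is an infinite one-way path; two rays are equivalent if there are infinitely many disjoint paths between them, and an end is an equivalence class of rays. $\chi(G)$ denotes the chromatic number (minimum number of colors in a proper vertex-coloring). A vertex-coloring of $G$ is periodic if the subgroup of automorphisms of $G$ mapping every vertex to a vertex of the same color acts quasi-transitively on $V(G)$, i.e. $V(G)$ has finitely many orbits under this subgroup. *)

theory Defs
  imports Main
begin

text \<open>A (simple, undirected) graph on vertex type 'a: the vertex set is UNIV,
  adjacency is a symmetric irreflexive relation E.\<close>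

definition simple_graph :: "('a \<Rightarrow> 'a \<Rightarrow> bool) \<Rightarrow> bool" where
  "simple_graph E \<longleftrightarrow> (\<forall>u v. E u v \<longrightarrow> E v u) \<and> (\<forall>v. \<not> E v v)"

definition locally_finite :: "('a \<Rightarrow> 'a \<Rightarrow> bool) \<Rightarrow> bool" where
  "locally_finite E \<longleftrightarrow> (\<forall>v. finite {u. E v u})"

definition connected_graph :: "('a \<Rightarrow> 'a \<Rightarrow> bool) \<Rightarrow> bool" where
  "connected_graph E \<longleftrightarrow> (\<forall>u v. E\<^sup>*\<^sup>* u v)"

definition automorphisms :: "('a \<Rightarrow> 'a \<Rightarrow> bool) \<Rightarrow> ('a \<Rightarrow> 'a) set" where
  "automorphisms E = {f. bij f \<and> (\<forall>u v. E u v \<longleftrightarrow> E (f u) (f v))}"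

definition finitely_many_orbits :: "('a \<Rightarrow> 'a) set \<Rightarrow> bool" where
  "finitely_many_orbits H \<longleftrightarrow> finite ((\<lambda>v. {h v | h. h \<in> H}) ` UNIV)"

definition quasi_transitive :: "('a \<Rightarrow> 'a \<Rightarrow> bool) \<Rightarrow> bool" where
  "quasi_transitive E \<longleftrightarrow> finitely_many_orbits (automorphisms E)"

definition is_ray :: "('a \<Rightarrow> 'a \<Rightarrow> bool) \<Rightarrow> (nat \<Rightarrow> 'a) \<Rightarrow> bool" where
  "is_ray E r \<longleftrightarrow> inj r \<and> (\<forall>n. E (r n) (r (Suc n)))"

definition is_path :: "('a \<Rightarrow> 'a \<Rightarrow> bool) \<Rightarrow> 'a list \<Rightarrow> bool" where
  "is_path E p \<longleftrightarrow> p \<noteq> [] \<and> distinct p \<and> (\<forall>i. Suc i < length p \<longrightarrow> E (p ! i) (p ! Suc i))"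

definition equiv_rays :: "('a \<Rightarrow> 'a \<Rightarrow> bool) \<Rightarrow> (nat \<Rightarrow> 'a) \<Rightarrow> (nat \<Rightarrow> 'a) \<Rightarrow> bool" where
  "equiv_rays E r s \<longleftrightarrow>
     (\<exists>P. infinite P \<and>
          (\<forall>p\<in>P. is_path E p \<and> hd p \<in> range r \<and> last p \<in> range s) \<and>
          (\<forall>p\<in>P. \<forall>q\<in>P. p \<noteq> q \<longrightarrow> set p \<inter> set q = {}))"

definition ends :: "('a \<Rightarrow> 'a \<Rightarrow> bool) \<Rightarrow> (nat \<Rightarrow> 'a) set set" where
  "ends E = {r. is_ray E r} // {(r, s). is_ray E r \<and> is_ray E s \<and> equiv_rays E r s}"

definition proper_coloring :: "('a \<Rightarrow> 'a \<Rightarrow> bool) \<Rightarrow> ('a \<Rightarrow> nat) \<Rightarrow> bool" where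
  "proper_coloring E c \<longleftrightarrow> (\<forall>u v. E u v \<longrightarrow> c u \<noteq> c v)"

definition chromatic_number :: "('a \<Rightarrow> 'a \<Rightarrow> bool) \<Rightarrow> nat" where
  "chromatic_number E = (LEAST k. \<exists>c. proper_coloring E c \<and> range c \<subseteq> {..<k})"

definition color_preserving_automorphisms ::
    "('a \<Rightarrow> 'a \<Rightarrow> bool) \<Rightarrow> ('a \<Rightarrow> nat) \<Rightarrow> ('a \<Rightarrow> 'a) set" where
  "color_preserving_automorphisms E c = {f \<in> automorphisms E. \<forall>v. c (f v) = c v}"

definition periodic_coloring :: "('a \<Rightarrow> 'a \<Rightarrow> bool) \<Rightarrow> ('a \<Rightarrow> nat) \<Rightarrow> bool" where
  "periodic_coloring E c \<longleftrightarrow> finitely_many_orbits (color_preserving_automorphisms E c)"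

end

(* A translation of G is an automorphism t together with a height function h : V -> int such
   that h (t v) = h v + 1 and every level set of h is finite.

   Given a translation, take a proper colouring c with chi(G) colours and a bound L on the height
   difference along an edge. By pigeonhole, the colour patterns of c on two windows of L
   consecutive levels, at heights i and i + p with p >= L, agree up to t^p. Repeating the slab
   i <= h < i + p periodically gives a proper colouring with the same colours that is invariant
   under t^p, and the finite slab meets every orbit of the colour-preserving automorphisms.

   A translation exists: two inequivalent rays are separated by a finite connected set K, and
   after absorbing the finite components of G - K (a third infinite one would give a third end)
   G is the disjoint union of K and two infinite components A and B. Quasi-transitivity moves K
   into A and into B; such an automorphism, or the composite of two, is a map t sending K and A
   into A. The translates t^n K are then pairwise disjoint, so by local finiteness the sets t^n A
   shrink to nothing as n grows and exhaust G as n decreases; h v is the n with v in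
   t^n A - t^(n+1) A. Level 0 is A - t A, which is covered by t K and the intersection of A with
   t B, and the latter is finite because otherwise G - (K u t K) would have three infinite
   components. *)

theory Submission
  imports Defs
begin

section \<open>Automorphisms, integer powers and level functions\<close>

lemma automorphism_bij: "f \<in> automorphisms E \<Longrightarrow> bij f"
  by (simp add: automorphisms_def)

lemma automorphism_adj_iff: "f \<in> automorphisms E \<Longrightarrow> E (f u) (f v) \<longleftrightarrow> E u v"
  by (simp add: automorphisms_def)

lemma id_automorphism: "id \<in> automorphisms E"
  by (simp add: automorphisms_def)

lemma comp_automorphism:
  "f \<in> automorphisms E \<Longrightarrow> g \<in> automorphisms E \<Longrightarrow> f \<circ> g \<in> automorphisms E"
  by (auto simp: automorphisms_def bij_comp)

lemma inv_automorphism: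
  assumes "f \<in> automorphisms E"
  shows "inv f \<in> automorphisms E"
proof -
  have f: "bij f" using assms by (rule automorphism_bij)
  have "E (inv f u) (inv f v) \<longleftrightarrow> E u v" for u v
    using automorphism_adj_iff[OF assms, of "inv f u" "inv f v"] f
    by (simp add: bij_is_surj surj_f_inv_f)
  then show ?thesis using f by (simp add: automorphisms_def bij_imp_bij_inv)
qed

lemma funpow_automorphism: "f \<in> automorphisms E \<Longrightarrow> f ^^ n \<in> automorphisms E"
  by (induction n) (auto simp: id_automorphism comp_automorphism)

lemma automorphism_relpowp:
  assumes "f \<in> automorphisms E" "(E ^^ m) u v"
  shows "(E ^^ m) (f u) (f v)"
  using assms(2)
proof (induction m arbitrary: v)
  case (Suc m)
  then obtain w where "(E ^^ m) u w" "E w v" by (meson relpowp_Suc_E)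
  with Suc.IH automorphism_adj_iff[OF assms(1)] show ?case by (meson relpowp_Suc_I)
qed simp

definition funpow_int :: "('a \<Rightarrow> 'a) \<Rightarrow> int \<Rightarrow> 'a \<Rightarrow> 'a" where
  "funpow_int f n = (if 0 \<le> n then f ^^ nat n else inv f ^^ nat (- n))"

lemma funpow_int_0 [simp]: "funpow_int f 0 = id"
  by (simp add: funpow_int_def)

lemma funpow_int_of_nat: "funpow_int f (int n) = f ^^ n"
  by (simp add: funpow_int_def)

lemma funpow_int_neg_of_nat: "funpow_int f (- int n) = inv f ^^ n"
  by (cases n) (auto simp: funpow_int_def simp del: of_nat_Suc)

lemma funpow_int_1 [simp]: "funpow_int f 1 = f"
  using funpow_int_of_nat[of f 1] by simp

lemma funpow_int_plus_1:
  assumes "bij f"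
  shows "funpow_int f (n + 1) = f \<circ> funpow_int f n"
proof (cases "0 \<le> n")
  case True
  then have "funpow_int f (n + 1) = f ^^ Suc (nat n)"
    by (simp add: funpow_int_def Suc_nat_eq_nat_zadd1 add.commute)
  with True show ?thesis by (simp add: funpow_int_def)
next
  case False
  define m where "m = nat (- n) - 1"
  have m: "n = - int (Suc m)" using False unfolding m_def by simp
  have "f \<circ> inv f = id" using assms by (auto simp: fun_eq_iff bij_is_surj surj_f_inv_f)
  then have "f \<circ> (inv f ^^ Suc m) = inv f ^^ m" by (simp only: funpow.simps(2) o_assoc id_comp)
  moreover have "n + 1 = - int m" using m by simp
  ultimately show ?thesis using m by (simp only: funpow_int_neg_of_nat)
qed

lemma funpow_int_minus_1:
  assumes "bij f"
  shows "funpow_int f (n - 1) = inv f \<circ> funpow_int f n"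
proof -
  have "inv f \<circ> f = id" using assms by (simp add: bij_is_inj)
  then show ?thesis using funpow_int_plus_1[OF assms, of "n - 1"] by (simp add: o_assoc)
qed

lemma funpow_int_add:
  assumes "bij f"
  shows "funpow_int f (m + n) = funpow_int f m \<circ> funpow_int f n"
proof (induction m rule: int_induct[where k = 0])
  case (step1 i)
  have "funpow_int f (i + 1 + n) = f \<circ> funpow_int f (i + n)"
    using funpow_int_plus_1[OF assms, of "i + n"] by (simp add: ac_simps)
  then show ?case using step1 funpow_int_plus_1[OF assms, of i] by (simp add: comp_assoc)
next
  case (step2 i)
  have "funpow_int f (i - 1 + n) = inv f \<circ> funpow_int f (i + n)"
    using funpow_int_minus_1[OF assms, of "i + n"] by (simp add: algebra_simps)
  then show ?case using step2 funpow_int_minus_1[OF assms, of i] by (simp add: comp_assoc)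
qed simp

lemma funpow_int_add_apply: "bij f \<Longrightarrow> funpow_int f (m + n) x = funpow_int f m (funpow_int f n x)"
  by (simp add: funpow_int_add)

lemma funpow_int_neg_cancel: "bij f \<Longrightarrow> funpow_int f n (funpow_int f (- n) x) = x"
  using funpow_int_add_apply[of f n "- n" x] by simp

lemma funpow_int_automorphism: "f \<in> automorphisms E \<Longrightarrow> funpow_int f n \<in> automorphisms E"
  by (simp add: funpow_int_def funpow_automorphism inv_automorphism)

lemma funpow_image_subset: "f ` X \<subseteq> X \<Longrightarrow> (f ^^ n) ` X \<subseteq> X"
  by (induction n) (auto simp: image_comp[symmetric])

lemma funpow_images_disjoint:
  assumes "bij f" "K \<subseteq> f ` Y" "Y \<subseteq> f ` Y" "K \<inter> Y = {}" "m < n"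
  shows "(f ^^ m) ` K \<inter> (f ^^ n) ` K = {}"
proof -
  have step: "(f ^^ j) ` Y \<subseteq> (f ^^ Suc j) ` Y" for j
  proof -
    have "(f ^^ Suc j) ` Y = (f ^^ j) ` (f ` Y)" by (simp only: funpow_Suc_right image_comp)
    then show ?thesis using assms(3) by (simp add: image_mono)
  qed
  have mono: "(f ^^ i) ` Y \<subseteq> (f ^^ j) ` Y" if "i \<le> j" for i j
    using that
  proof (induction j)
    case (Suc j)
    then show ?case using step[of j] by (auto simp: le_Suc_eq)
  qed simp
  have "(f ^^ m) ` K \<subseteq> (f ^^ m) ` (f ` Y)" using assms(2) by (rule image_mono)
  also have "\<dots> = (f ^^ Suc m) ` Y" by (simp only: funpow_Suc_right image_comp)
  also have "\<dots> \<subseteq> (f ^^ n) ` Y" using assms(5) by (intro mono) simp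
  finally have "(f ^^ m) ` K \<subseteq> (f ^^ n) ` Y" .
  moreover have "(f ^^ n) ` K \<inter> (f ^^ n) ` Y = {}"
    using assms(1,4) by (simp add: bij_is_inj image_Int[symmetric])
  ultimately show ?thesis by blast
qed

lemma funpow_int_image_antimono:
  assumes t: "bij t" and into: "t ` X \<subseteq> X" and "n \<le> m"
  shows "funpow_int t m ` X \<subseteq> funpow_int t n ` X"
proof -
  have "funpow_int t m ` X = funpow_int t n ` (t ^^ nat (m - n)) ` X"
    using funpow_int_add[OF t, of n "m - n"] assms(3) by (simp add: image_comp funpow_int_def)
  also have "\<dots> \<subseteq> funpow_int t n ` X" using funpow_image_subset[OF into] by (intro image_mono)
  finally show ?thesis .
qed

lemma unique_level:
  assumes t: "bij t" and into: "t ` X \<subseteq> X"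
    and escapes: "\<exists>n. v \<notin> (t ^^ n) ` X" and enters: "\<exists>n. v \<in> (inv t ^^ n) ` X"
  shows "\<exists>!n. v \<in> funpow_int t n ` X \<and> v \<notin> funpow_int t (n + 1) ` X"
proof -
  let ?M = "\<lambda>n. v \<in> funpow_int t n ` X"
  have down: "?M n" if "n \<le> m" "?M m" for n m
    using funpow_int_image_antimono[OF t into that(1)] that(2) by blast
  have "\<exists>n. ?M n \<and> \<not> ?M (n + 1)"
  proof (rule ccontr)
    assume "\<nexists>n. ?M n \<and> \<not> ?M (n + 1)"
    then have step: "?M n \<Longrightarrow> ?M (n + 1)" for n by blast
    obtain l where "v \<in> (inv t ^^ l) ` X" using enters by blast
    then have "?M (- int l)" by (simp add: funpow_int_neg_of_nat)
    obtain u where "v \<notin> (t ^^ u) ` X" using escapes by blast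
    then have "\<not> ?M (int u)" by (simp add: funpow_int_of_nat)
    have climb: "?M (- int l + int k)" for k
    proof (induction k)
      case (Suc k)
      then have "?M (- int l + int k + 1)" by (rule step)
      then show ?case by (simp add: ac_simps)
    qed (simp add: \<open>?M (- int l)\<close>)
    have "- int l + int (u + l) = int u" by simp
    with climb[of "u + l"] have "?M (int u)" by simp
    with \<open>\<not> ?M (int u)\<close> show False ..
  qed
  moreover have "n = n'" if "?M n" "\<not> ?M (n + 1)" "?M n'" "\<not> ?M (n' + 1)" for n n'
  proof (rule ccontr)
    assume "n \<noteq> n'"
    then consider "n + 1 \<le> n'" | "n' + 1 \<le> n" by linarith
    then show False using that down by cases blast+
  qed
  ultimately show ?thesis by blast
qed

lemma level_function_exists:
  assumes t: "bij t" and into: "t ` X \<subseteq> X"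
    and escapes: "\<And>v. \<exists>n. v \<notin> (t ^^ n) ` X" and enters: "\<And>v. \<exists>n. v \<in> (inv t ^^ n) ` X"
  shows "\<exists>h :: 'a \<Rightarrow> int. (\<forall>v. h (t v) = h v + 1) \<and> {v. h v = 0} \<subseteq> X - t ` X"
proof -
  define M where "M n v \<longleftrightarrow> v \<in> funpow_int t n ` X" for n v
  have unique: "\<exists>!n. M n v \<and> \<not> M (n + 1) v" for v
    unfolding M_def using unique_level[OF t into escapes enters] .
  define h where "h v = (THE n. M n v \<and> \<not> M (n + 1) v)" for v
  have h: "M (h v) v" "\<not> M (h v + 1) v" for v
    using theI'[OF unique] unfolding h_def by blast+
  have M_t: "M (n + 1) (t v) \<longleftrightarrow> M n v" for n v
  proof -
    have "funpow_int t (n + 1) ` X = t ` funpow_int t n ` X"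
      using funpow_int_plus_1[OF t, of n] by (simp add: image_comp)
    then show ?thesis unfolding M_def using bij_is_inj[OF t] by (simp add: inj_image_mem_iff)
  qed
  have "h (t v) = h v + 1" for v
  proof -
    have "M (h v + 1) (t v)" "\<not> M (h v + 1 + 1) (t v)"
      using h[of v] M_t[of "h v" v] M_t[of "h v + 1" v] by simp_all
    with h[of "t v"] unique[of "t v"] show ?thesis by blast
  qed
  moreover have "{v. h v = 0} \<subseteq> X - t ` X"
  proof
    fix v assume "v \<in> {v. h v = 0}"
    then have "M 0 v" "\<not> M 1 v" using h[of v] by simp_all
    then show "v \<in> X - t ` X" unfolding M_def by simp
  qed
  ultimately show ?thesis by blast
qed

section \<open>Periodic colourings from a translation\<close>

lemma mod_ne_if_dist_le:
  fixes a b L :: int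
  assumes "a \<noteq> b" "\<bar>b - a\<bar> \<le> L"
  shows "a mod (L + 1) \<noteq> b mod (L + 1)"
proof
  assume "a mod (L + 1) = b mod (L + 1)"
  then obtain z where z: "b - a = (L + 1) * z" by (metis mod_eq_dvd_iff dvd_def)
  with assms(1) have "z \<noteq> 0" by auto
  moreover have "0 \<le> L" using assms(2) by linarith
  ultimately have "\<bar>(L + 1) * z\<bar> \<ge> L + 1" by (simp add: abs_mult)
  with assms(2) z show False by simp
qed

lemma color_preserving_comp:
  "f \<in> color_preserving_automorphisms E c \<Longrightarrow> g \<in> color_preserving_automorphisms E c
   \<Longrightarrow> f \<circ> g \<in> color_preserving_automorphisms E c"
  by (auto simp: color_preserving_automorphisms_def comp_automorphism)

lemma color_preserving_inv:
  assumes "f \<in> color_preserving_automorphisms E c"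
  shows "inv f \<in> color_preserving_automorphisms E c"
proof -
  have f: "f \<in> automorphisms E" "\<And>v. c (f v) = c v"
    using assms by (auto simp: color_preserving_automorphisms_def)
  have "c (inv f v) = c v" for v
    using f(2)[of "inv f v"] automorphism_bij[OF f(1)] by (simp add: bij_is_surj surj_f_inv_f)
  then show ?thesis using inv_automorphism[OF f(1)]
    by (simp add: color_preserving_automorphisms_def)
qed

lemma color_preserving_orbit_apply:
  assumes f: "f \<in> color_preserving_automorphisms E c"
  shows "{g (f v) |g. g \<in> color_preserving_automorphisms E c} =
    {g v |g. g \<in> color_preserving_automorphisms E c}"
proof (intro set_eqI iffI)
  fix x assume "x \<in> {g (f v) |g. g \<in> color_preserving_automorphisms E c}"
  then obtain g where "g \<in> color_preserving_automorphisms E c" "x = (g \<circ> f) v" by auto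
  with color_preserving_comp[OF _ f] show "x \<in> {g v |g. g \<in> color_preserving_automorphisms E c}"
    by blast
next
  fix x assume "x \<in> {g v |g. g \<in> color_preserving_automorphisms E c}"
  then obtain g where g: "g \<in> color_preserving_automorphisms E c" "x = g v" by auto
  have "bij f" using f by (auto simp: color_preserving_automorphisms_def automorphism_bij)
  then have "x = (g \<circ> inv f) (f v)" using g(2) by (simp add: bij_is_inj)
  with color_preserving_comp[OF g(1) color_preserving_inv[OF f]]
  show "x \<in> {g (f v) |g. g \<in> color_preserving_automorphisms E c}" by blast
qed

locale lf_graph =
  fixes E :: "'a \<Rightarrow> 'a \<Rightarrow> bool"
  assumes simple: "simple_graph E" and locally_finite: "locally_finite E"
begin

lemma adj_sym: "E u v \<Longrightarrow> E v u"
  using simple by (simp add: simple_graph_def)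

lemma adj_irrefl: "\<not> E v v"
  using simple by (simp add: simple_graph_def)

lemma finite_neighbours: "finite {v. E u v}"
  using locally_finite by (simp add: locally_finite_def)

lemma relpowp_sym: "(E ^^ m) u v \<Longrightarrow> (E ^^ m) v u"
proof (induction m arbitrary: v)
  case (Suc m)
  then obtain w where "(E ^^ m) u w" "E w v" by (meson relpowp_Suc_E)
  with Suc.IH adj_sym show ?case by (meson relpowp_Suc_I2)
qed simp

lemma finite_relpowp: "finite {w. (E ^^ m) v w}"
proof (induction m)
  case (Suc m)
  have "{w. (E ^^ Suc m) v w} \<subseteq> (\<Union>u\<in>{u. (E ^^ m) v u}. {w. E u w})"
    by (auto elim: relpowp_Suc_E)
  with Suc finite_neighbours show ?case by (meson finite_UN_I finite_subset)
qed simp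

end

locale translation = lf_graph +
  fixes t :: "'a \<Rightarrow> 'a" and h :: "'a \<Rightarrow> int"
  assumes t_automorphism: "t \<in> automorphisms E"
    and h_t: "h (t v) = h v + 1"
    and finite_h_0: "finite {v. h v = 0}"
begin

lemma bij_t: "bij t"
  using t_automorphism by (rule automorphism_bij)

lemma h_funpow_int: "h (funpow_int t n v) = h v + n"
proof (induction n rule: int_induct[where k = 0])
  case (step1 i)
  then show ?case using funpow_int_plus_1[OF bij_t, of i] h_t by simp
next
  case (step2 i)
  have "h (inv t w) = h w - 1" for w
    using h_t[of "inv t w"] bij_t by (simp add: bij_is_surj surj_f_inv_f)
  with step2 show ?case using funpow_int_minus_1[OF bij_t, of i] by simp
qed simp

lemma finite_h_eq: "finite {v. h v = n}"
proof -
  have "{v. h v = n} \<subseteq> funpow_int t n ` {v. h v = 0}"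
  proof
    fix v assume "v \<in> {v. h v = n}"
    then have "h (funpow_int t (- n) v) = 0" by (simp add: h_funpow_int)
    then have "funpow_int t n (funpow_int t (- n) v) \<in> funpow_int t n ` {v. h v = 0}" by blast
    then show "v \<in> funpow_int t n ` {v. h v = 0}" by (simp add: funpow_int_neg_cancel[OF bij_t])
  qed
  then show ?thesis using finite_h_0 finite_subset by blast
qed

lemma finite_h_between: "finite {v. a \<le> h v \<and> h v < b}"
proof -
  have "{v. a \<le> h v \<and> h v < b} = (\<Union>n\<in>{a..<b}. {v. h v = n})" by auto
  then show ?thesis using finite_h_eq by simp
qed

lemma adj_h_bounded: "\<exists>L>0. \<forall>u v. E u v \<longrightarrow> \<bar>h v - h u\<bar> \<le> L"
proof -
  define N where "N = (\<Union>u\<in>{v. h v = 0}. {w. E u w})"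
  have "finite N" unfolding N_def using finite_h_0 by (simp add: finite_neighbours)
  define L where "L = Max (insert 1 ((\<lambda>w. \<bar>h w\<bar>) ` N))"
  have "\<bar>h v - h u\<bar> \<le> L" if "E u v" for u v
  proof -
    let ?f = "funpow_int t (- h u)"
    have "E (?f u) (?f v)"
      using that automorphism_adj_iff[OF funpow_int_automorphism[OF t_automorphism]] by blast
    moreover have "h (?f u) = 0" by (simp add: h_funpow_int)
    ultimately have "?f v \<in> N" unfolding N_def by blast
    then have "\<bar>h (?f v)\<bar> \<le> L" unfolding L_def using \<open>finite N\<close> by simp
    then show ?thesis by (simp add: h_funpow_int)
  qed
  moreover have "L \<ge> 1" unfolding L_def using \<open>finite N\<close> by simp
  ultimately show ?thesis by (intro exI[of _ L]) auto
qed


lemma finite_coloring_exists: "\<exists>k c. proper_coloring E c \<and> range c \<subseteq> {..<k}"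
proof -
  obtain L where "L > 0" and L: "\<And>u v. E u v \<Longrightarrow> \<bar>h v - h u\<bar> \<le> L"
    using adj_h_bounded by blast
  obtain idx :: "'a \<Rightarrow> nat" and M where idx: "idx ` {v. h v = 0} = {..<M}" "inj_on idx {v. h v = 0}"
    using finite_imp_inj_to_nat_seg[OF finite_h_0] by (auto simp: lessThan_def)
  define base where "base v = funpow_int t (- h v) v" for v
  have h_base: "h (base v) = 0" for v by (simp add: base_def h_funpow_int)
  have idx_less: "idx (base v) < M" for v using idx(1) h_base by blast
  \<comment> \<open>The level-0 translate separates vertices of equal height; \<open>h mod (L + 1)\<close> separates
    adjacent vertices of different heights.\<close>
  define c where "c v = idx (base v) + M * nat (h v mod (L + 1))" for v
  have c_mod: "c v mod M = idx (base v)" and c_div: "c v div M = nat (h v mod (L + 1))" for v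
    using idx_less[of v] unfolding c_def by simp_all
  have "c u \<noteq> c v" if "E u v" for u v
  proof (cases "h u = h v")
    case True
    have "u \<noteq> v" using that adj_irrefl by blast
    then have "base u \<noteq> base v"
      using True funpow_int_automorphism[OF t_automorphism] automorphism_bij
      unfolding base_def by (metis bij_is_inj injD)
    then have "idx (base u) \<noteq> idx (base v)"
      using idx(2) h_base by (simp add: inj_on_eq_iff)
    then show ?thesis using c_mod by metis
  next
    case False
    have "h u mod (L + 1) \<noteq> h v mod (L + 1)"
      using False L[OF that] by (rule mod_ne_if_dist_le)
    with \<open>L > 0\<close> have "nat (h u mod (L + 1)) \<noteq> nat (h v mod (L + 1))"
      by (simp add: eq_nat_nat_iff)
    then show ?thesis using c_div by metis
  qed
  moreover have "c v < M + M * nat L" for v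
  proof -
    have "nat (h v mod (L + 1)) \<le> nat L" using \<open>L > 0\<close> pos_mod_bound[of "L + 1" "h v"] by simp
    then have "M * nat (h v mod (L + 1)) \<le> M * nat L" by (rule mult_le_mono2)
    then show ?thesis using idx_less[of v] unfolding c_def by linarith
  qed
  ultimately have "proper_coloring E c \<and> range c \<subseteq> {..<M + M * nat L}"
    by (auto simp: proper_coloring_def)
  then show ?thesis by blast
qed

lemma window_repeats:
  fixes c :: "'a \<Rightarrow> nat"
  assumes c: "range c \<subseteq> {..<k}" and "L > 0"
  shows "\<exists>i p. L \<le> p \<and> (\<forall>y. i \<le> h y \<and> h y < i + L \<longrightarrow> c (funpow_int t p y) = c y)"
proof -
  define W where "W = {x. 0 \<le> h x \<and> h x < L}"
  define pattern where
    "pattern n = (\<lambda>x. if x \<in> W then c (funpow_int t (int n * L) x) else 0)" for n :: nat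
  have "range pattern \<subseteq> {f. \<forall>x. (x \<in> W \<longrightarrow> f x \<in> {..<k}) \<and> (x \<notin> W \<longrightarrow> f x = 0)}"
    using c unfolding pattern_def by fastforce
  moreover have "finite {f. \<forall>x. (x \<in> W \<longrightarrow> f x \<in> {..<k}) \<and> (x \<notin> W \<longrightarrow> f x = (0::nat))}"
    unfolding W_def by (intro finite_set_of_finite_funs finite_h_between) simp
  ultimately have "\<not> inj pattern"
    using finite_subset finite_imageD infinite_UNIV_nat by blast
  then obtain n1 n2 where n12: "n1 < n2" "pattern n1 = pattern n2"
    unfolding inj_def by (metis linorder_neq_iff)
  define i where "i = int n1 * L"
  define p where "p = int (n2 - n1) * L"
  have "c (funpow_int t p y) = c y" if "i \<le> h y" "h y < i + L" for y
  proof -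
    define x where "x = funpow_int t (- i) y"
    have "x \<in> W" using that unfolding W_def x_def by (simp add: h_funpow_int)
    then have "c (funpow_int t i x) = c (funpow_int t (int n2 * L) x)"
      using fun_cong[OF n12(2), of x] unfolding pattern_def i_def by simp
    moreover have "int n2 * L = p + i" using n12(1) unfolding p_def i_def
      by (simp add: algebra_simps)
    ultimately show ?thesis
      unfolding x_def by (simp add: funpow_int_add_apply[OF bij_t] funpow_int_neg_cancel[OF bij_t])
  qed
  moreover have "L \<le> p" using n12(1) \<open>L > 0\<close> unfolding p_def by simp
  ultimately show ?thesis by blast
qed


definition slab :: "int \<Rightarrow> int \<Rightarrow> 'a \<Rightarrow> int" where
  "slab i p v = (h v - i) div p"

lemma slab_bounds:
  assumes "0 < p"
  shows "slab i p v * p \<le> h v - i" "h v - i < slab i p v * p + p"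
  using assms pos_mod_bound[of p "h v - i"] pos_mod_sign[of p "h v - i"]
    div_mult_mod_eq[of "h v - i" p]
  unfolding slab_def by linarith+

lemma slab_funpow_int:
  assumes "0 < p"
  shows "slab i p (funpow_int t p v) = slab i p v + 1"
proof -
  have "h (funpow_int t p v) - i = (h v - i) + p" by (simp add: h_funpow_int)
  then show ?thesis unfolding slab_def using div_add_self2[of p "h v - i"] assms by (simp only:)
qed

lemma slab_adj:
  assumes L: "\<And>u v. E u v \<Longrightarrow> \<bar>h v - h u\<bar> \<le> L" and "L \<le> p" "0 < p"
    and "E u v" "h u \<le> h v"
  shows "slab i p v = slab i p u \<or> slab i p v = slab i p u + 1"
proof -
  have "slab i p u \<le> slab i p v" unfolding slab_def using assms(3,5) by (simp add: zdiv_mono1)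
  moreover have "slab i p v \<le> slab i p u + 1"
  proof -
    have "h v - i \<le> (h u - i) + p" using L[OF assms(4)] assms(2,5) by simp
    then have "slab i p v \<le> ((h u - i) + p) div p"
      unfolding slab_def using assms(3) by (simp add: zdiv_mono1)
    also have "\<dots> = slab i p u + 1"
      unfolding slab_def using div_add_self2[of p "h u - i"] assms(3) by (simp only:)
    finally show ?thesis .
  qed
  ultimately show ?thesis by linarith
qed

text \<open>An edge spans at most \<open>L \<le> p\<close> levels, so it
  lies within one slab or crosses from slab \<open>q\<close> into the bottom window of slab \<open>q + 1\<close>, where
  the two colourings agree by the window hypothesis.\<close>

definition periodize :: "('a \<Rightarrow> nat) \<Rightarrow> int \<Rightarrow> int \<Rightarrow> 'a \<Rightarrow> nat" where
  "periodize c i p v = c (funpow_int t (- (slab i p v * p)) v)"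

lemma periodize_funpow_int:
  assumes "0 < p"
  shows "periodize c i p (funpow_int t p v) = periodize c i p v"
proof -
  have "- ((slab i p v + 1) * p) + p = - (slab i p v * p)" by (simp add: algebra_simps)
  then show ?thesis unfolding periodize_def slab_funpow_int[OF assms]
    by (simp only: funpow_int_add_apply[OF bij_t, symmetric])
qed

lemma proper_periodize:
  assumes proper: "proper_coloring E c"
    and L: "\<And>u v. E u v \<Longrightarrow> \<bar>h v - h u\<bar> \<le> L" and "L \<le> p" "0 < p"
    and window: "\<And>y. i \<le> h y \<Longrightarrow> h y < i + L \<Longrightarrow> c (funpow_int t p y) = c y"
  shows "proper_coloring E (periodize c i p)"
proof -
  have upward: "periodize c i p u \<noteq> periodize c i p v" if e: "E u v" and le: "h u \<le> h v" for u v
  proof -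
    define f where "f = funpow_int t (- (slab i p u * p))"
    have "E (f u) (f v)"
      using e automorphism_adj_iff[OF funpow_int_automorphism[OF t_automorphism]]
      unfolding f_def by blast
    then have c_f: "c (f u) \<noteq> c (f v)" using proper by (simp add: proper_coloring_def)
    from slab_adj[OF L \<open>L \<le> p\<close> \<open>0 < p\<close> e le] show ?thesis
    proof
      assume "slab i p v = slab i p u"
      then show ?thesis using c_f unfolding periodize_def f_def by simp
    next
      assume q: "slab i p v = slab i p u + 1"
      define w where "w = funpow_int t (- ((slab i p u + 1) * p)) v"
      have "f v = funpow_int t p w"
        unfolding f_def w_def by (simp add: funpow_int_add_apply[OF bij_t, symmetric] algebra_simps)
      moreover have "i \<le> h w" "h w < i + L"
        using slab_bounds[OF \<open>0 < p\<close>, where i = i and v = v]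
          slab_bounds[OF \<open>0 < p\<close>, where i = i and v = u] L[OF e] le q
        unfolding w_def h_funpow_int by (simp_all add: algebra_simps)
      ultimately have "c (f v) = c w" using window by simp
      then show ?thesis using c_f q unfolding periodize_def f_def w_def by simp
    qed
  qed
  show ?thesis
    unfolding proper_coloring_def
  proof (intro allI impI)
    fix u v assume "E u v"
    show "periodize c i p u \<noteq> periodize c i p v"
    proof (cases "h u \<le> h v")
      case True
      with upward \<open>E u v\<close> show ?thesis by blast
    next
      case False
      with upward[OF adj_sym[OF \<open>E u v\<close>]] show ?thesis by simp
    qed
  qed
qed

lemma periodic_if_funpow_int_invariant:
  assumes "0 < p" and invariant: "\<And>v. c (funpow_int t p v) = c v"
  shows "periodic_coloring E c"
proof -
  let ?H = "color_preserving_automorphisms E c"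
  define orbit where "orbit v = {g v |g. g \<in> ?H}" for v
  have "c (funpow_int t (m * p) v) = c v" for m v
  proof (induction m rule: int_induct[where k = 0])
    case (step1 m)
    have "funpow_int t ((m + 1) * p) v = funpow_int t p (funpow_int t (m * p) v)"
      by (simp add: funpow_int_add_apply[OF bij_t, symmetric] algebra_simps)
    then show ?case using step1 invariant by simp
  next
    case (step2 m)
    have "funpow_int t (m * p) v = funpow_int t p (funpow_int t ((m - 1) * p) v)"
      by (simp add: funpow_int_add_apply[OF bij_t, symmetric] algebra_simps)
    then show ?case using step2 invariant by simp
  qed simp
  then have multiple: "funpow_int t (m * p) \<in> ?H" for m
    using funpow_int_automorphism[OF t_automorphism]
      by (simp add: color_preserving_automorphisms_def)
  have "orbit v \<in> orbit ` {w. 0 \<le> h w \<and> h w < p}" for v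
  proof -
    define k where "k = h v div p * p"
    define w where "w = funpow_int t (- k) v"
    have "orbit (funpow_int t k w) = orbit w"
      unfolding orbit_def k_def by (rule color_preserving_orbit_apply[OF multiple])
    moreover have "v = funpow_int t k w" unfolding w_def
      by (simp add: funpow_int_neg_cancel[OF bij_t])
    ultimately have "orbit v = orbit w" by simp
    moreover have "0 \<le> h w \<and> h w < p"
      using \<open>0 < p\<close> unfolding w_def k_def h_funpow_int by (simp add: minus_div_mult_eq_mod)
    ultimately show ?thesis by blast
  qed
  then have "range orbit \<subseteq> orbit ` {w. 0 \<le> h w \<and> h w < p}" by blast
  then have "finite (range orbit)" by (rule finite_surj[OF finite_h_between])
  then show ?thesis unfolding periodic_coloring_def finitely_many_orbits_def orbit_def .
qed

theorem periodic_chromatic_coloring_exists: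
  "\<exists>c. proper_coloring E c \<and> range c \<subseteq> {..<chromatic_number E} \<and> periodic_coloring E c"
proof -
  obtain c where c: "proper_coloring E c" "range c \<subseteq> {..<chromatic_number E}"
    using LeastI_ex[OF finite_coloring_exists] unfolding chromatic_number_def by blast
  obtain L where "L > 0" and L: "\<And>u v. E u v \<Longrightarrow> \<bar>h v - h u\<bar> \<le> L"
    using adj_h_bounded by blast
  obtain i p where "L \<le> p" and window: "\<And>y. i \<le> h y \<Longrightarrow> h y < i + L \<Longrightarrow> c (funpow_int t p y) = c y"
    using window_repeats[OF c(2) \<open>L > 0\<close>] by blast
  have "0 < p" using \<open>L > 0\<close> \<open>L \<le> p\<close> by simp
  have "proper_coloring E (periodize c i p)"
    using c(1) L \<open>L \<le> p\<close> \<open>0 < p\<close> window by (rule proper_periodize)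
  moreover have "range (periodize c i p) \<subseteq> {..<chromatic_number E}"
    using c(2) unfolding periodize_def by auto
  moreover have "periodic_coloring E (periodize c i p)"
    using \<open>0 < p\<close> periodize_funpow_int[OF \<open>0 < p\<close>] by (rule periodic_if_funpow_int_invariant)
  ultimately show ?thesis by blast
qed

end

section \<open>Components of a graph minus a vertex set\<close>

definition induced :: "('a \<Rightarrow> 'a \<Rightarrow> bool) \<Rightarrow> 'a set \<Rightarrow> 'a \<Rightarrow> 'a \<Rightarrow> bool" where
  "induced E X u v \<longleftrightarrow> E u v \<and> u \<in> X \<and> v \<in> X"

text \<open>For \<open>x \<notin> S\<close> this is the connected component of \<open>G - S\<close> containing \<open>x\<close>;
  for \<open>x \<in> S\<close> it degenerates to \<open>{x}\<close>.\<close>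

definition component :: "('a \<Rightarrow> 'a \<Rightarrow> bool) \<Rightarrow> 'a set \<Rightarrow> 'a \<Rightarrow> 'a set" where
  "component E S x = {y. (induced E (- S))\<^sup>*\<^sup>* x y}"

definition connected_on :: "('a \<Rightarrow> 'a \<Rightarrow> bool) \<Rightarrow> 'a set \<Rightarrow> bool" where
  "connected_on E X \<longleftrightarrow> (\<forall>u\<in>X. \<forall>v\<in>X. (induced E X)\<^sup>*\<^sup>* u v)"

lemma induced_rtranclp_mono:
  assumes "(induced E X)\<^sup>*\<^sup>* u v" "X \<subseteq> Y"
  shows "(induced E Y)\<^sup>*\<^sup>* u v"
proof -
  have "induced E X \<le> induced E Y" using assms(2) by (auto simp: induced_def)
  then show ?thesis using assms(1) rtranclp_mono by blast
qed

lemma induced_rtranclp_mem: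
  assumes "(induced E X)\<^sup>*\<^sup>* u v" "u \<in> X"
  shows "v \<in> X"
  using assms by (induction rule: rtranclp_induct) (auto simp: induced_def)

lemma component_self: "x \<in> component E S x"
  by (simp add: component_def)

lemma component_disjoint: "x \<notin> S \<Longrightarrow> component E S x \<inter> S = {}"
  unfolding component_def using induced_rtranclp_mem[of E "- S" x] by blast

lemma component_adj:
  assumes "x \<notin> S" "y \<in> component E S x" "E y z" "z \<notin> S"
  shows "z \<in> component E S x"
proof -
  have "y \<notin> S" using component_disjoint[OF assms(1)] assms(2) by blast
  with assms(3,4) have "induced E (- S) y z" by (simp add: induced_def)
  with assms(2) show ?thesis unfolding component_def by (simp add: rtranclp.rtrancl_into_rtrancl)
qed

lemma component_antimono: "T \<subseteq> S \<Longrightarrow> component E S x \<subseteq> component E T x"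
  unfolding component_def using induced_rtranclp_mono[of E "- S" x _ "- T"] by blast

lemma induced_automorphism:
  assumes f: "f \<in> automorphisms E" and "(induced E X)\<^sup>*\<^sup>* u v"
  shows "(induced E (f ` X))\<^sup>*\<^sup>* (f u) (f v)"
  using assms(2)
proof (induction rule: rtranclp_induct)
  case (step v w)
  then have "induced E (f ` X) (f v) (f w)"
    using automorphism_adj_iff[OF f] by (auto simp: induced_def)
  with step.IH show ?case by (rule rtranclp.rtrancl_into_rtrancl)
qed simp

lemma component_automorphism_subset:
  assumes f: "f \<in> automorphisms E"
  shows "f ` component E S x \<subseteq> component E (f ` S) (f x)"
proof -
  have "f ` (- S) = - f ` S" using automorphism_bij[OF f] by (rule bij_image_Compl_eq)
  then show ?thesis
    unfolding component_def using induced_automorphism[OF f, of "- S" x] by auto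
qed

lemma component_automorphism:
  assumes f: "f \<in> automorphisms E"
  shows "f ` component E S x = component E (f ` S) (f x)"
proof
  have bij: "bij f" using f by (rule automorphism_bij)
  have "inv f ` component E (f ` S) (f x) \<subseteq> component E (inv f ` f ` S) (inv f (f x))"
    by (rule component_automorphism_subset[OF inv_automorphism[OF f]])
  then have "f ` inv f ` component E (f ` S) (f x) \<subseteq> f ` component E S x"
    using bij by (simp add: bij_is_inj image_mono)
  then show "component E (f ` S) (f x) \<subseteq> f ` component E S x"
    using bij by (simp add: bij_is_surj image_f_inv_f)
qed (rule component_automorphism_subset[OF f])

context lf_graph
begin

lemma induced_rtranclp_sym: "(induced E X)\<^sup>*\<^sup>* u v \<Longrightarrow> (induced E X)\<^sup>*\<^sup>* v u"
  using symp_rtranclp[of "induced E X"] adj_sym by (auto simp: symp_def induced_def)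

lemma component_eq: "y \<in> component E S x \<Longrightarrow> component E S y = component E S x"
  unfolding component_def using induced_rtranclp_sym by (auto intro: rtranclp_trans)

lemma component_disjoint_if_ne:
  "component E S x \<noteq> component E S y \<Longrightarrow> component E S x \<inter> component E S y = {}"
  using component_eq by blast

lemma connected_onI:
  assumes "x \<in> X" "\<And>y. y \<in> X \<Longrightarrow> (induced E X)\<^sup>*\<^sup>* x y"
  shows "connected_on E X"
  unfolding connected_on_def using assms induced_rtranclp_sym by (meson rtranclp_trans)

lemma connected_on_component:
  assumes "x \<notin> S"
  shows "connected_on E (component E S x)"
proof (rule connected_onI[OF component_self])
  fix y assume "y \<in> component E S x"
  then have "(induced E (- S))\<^sup>*\<^sup>* x y" by (simp add: component_def)
  then show "(induced E (component E S x))\<^sup>*\<^sup>* x y"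
  proof (induction rule: rtranclp_induct)
    case (step v w)
    then have "v \<in> component E S x" "w \<in> component E S x"
      using induced_rtranclp_mem[OF step.IH component_self]
        component_adj[OF assms] by (auto simp: induced_def)
    with step show ?case by (auto simp: induced_def intro: rtranclp.rtrancl_into_rtrancl)
  qed simp
qed

lemma connected_on_subset_component:
  assumes "connected_on E X" "X \<inter> T = {}" "x \<in> X"
  shows "X \<subseteq> component E T x"
proof
  fix y assume "y \<in> X"
  with assms have "(induced E X)\<^sup>*\<^sup>* x y" by (simp add: connected_on_def)
  moreover have "X \<subseteq> - T" using assms(2) by blast
  ultimately show "y \<in> component E T x" unfolding component_def by (simp add: induced_rtranclp_mono)
qed

lemma connected_on_Un:
  assumes X: "connected_on E X" and Y: "connected_on E Y"
    and "E x y" "x \<in> X" "y \<in> Y"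
  shows "connected_on E (X \<union> Y)"
proof (rule connected_onI[of x])
  fix z assume z: "z \<in> X \<union> Y"
  have "(induced E (X \<union> Y))\<^sup>*\<^sup>* x y" using assms(3-5) by (auto simp: induced_def)
  moreover have "(induced E (X \<union> Y))\<^sup>*\<^sup>* x z" if "z \<in> X"
    using X that \<open>x \<in> X\<close> induced_rtranclp_mono[of E X x z] by (auto simp: connected_on_def)
  moreover have "(induced E (X \<union> Y))\<^sup>*\<^sup>* y z" if "z \<in> Y"
    using Y that \<open>y \<in> Y\<close> induced_rtranclp_mono[of E Y y z] by (auto simp: connected_on_def)
  ultimately show "(induced E (X \<union> Y))\<^sup>*\<^sup>* x z" using z by (meson UnE rtranclp_trans)
qed (use \<open>x \<in> X\<close> in simp)

lemma component_Un_disjoint: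
  assumes "x \<notin> S" "component E S x \<inter> T = {}"
  shows "component E (S \<union> T) x = component E S x"
proof
  show "component E (S \<union> T) x \<subseteq> component E S x" by (simp add: component_antimono)
  have "component E S x \<inter> (S \<union> T) = {}" using component_disjoint[OF assms(1)] assms(2) by blast
  from connected_on_subset_component[OF connected_on_component[OF assms(1)] this component_self]
  show "component E S x \<subseteq> component E (S \<union> T) x" .
qed

lemma component_first_step:
  assumes "y \<in> component E T c" "c \<notin> T"
  shows "y = c \<or> (\<exists>n. E c n \<and> n \<notin> T \<and> y \<in> component E (insert c T) n)"
proof -
  have "(induced E (- T))\<^sup>*\<^sup>* c y" using assms(1) by (simp add: component_def)
  then show ?thesis
  proof (induction rule: rtranclp_induct)
    case (step y z)
    have z: "E y z" "z \<notin> T" using step.hyps(2) by (simp_all add: induced_def)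
    consider "z = c" | "y = c" | "z \<noteq> c" "y \<noteq> c" by blast
    then show ?case
    proof cases
      case 2
      with z have "E c z" "z \<notin> T" by simp_all
      then show ?thesis by (intro disjI2 exI[of _ z]) (simp add: component_self)
    next
      case 3
      with step.IH obtain n where n: "E c n" "n \<notin> T" "y \<in> component E (insert c T) n" by blast
      have "n \<notin> insert c T" using n(1,2) adj_irrefl by auto
      moreover have "z \<notin> insert c T" using z(2) 3(1) by simp
      ultimately have "z \<in> component E (insert c T) n" using component_adj n(3) z(1) by metis
      with n show ?thesis by blast
    qed simp
  qed simp
qed

lemma is_path_iff: "is_path E p \<longleftrightarrow> p \<noteq> [] \<and> distinct p \<and> successively E p"
  by (simp add: is_path_def successively_conv_nth)

lemma successively_rtranclp: "successively R p \<Longrightarrow> p \<noteq> [] \<Longrightarrow> R\<^sup>*\<^sup>* (hd p) (last p)"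
proof (induction p)
  case (Cons x p)
  then show ?case
    by (cases "p = []") (auto simp: successively_Cons intro: converse_rtranclp_into_rtranclp)
qed simp

lemma path_in_component:
  assumes "is_path E p" "set p \<inter> S = {}"
  shows "last p \<in> component E S (hd p)"
proof -
  have "successively E p" "p \<noteq> []" using assms(1) by (simp_all add: is_path_iff)
  have "successively (induced E (- S)) p"
    using \<open>successively E p\<close> by (rule successively_mono) (use assms(2) in \<open>auto simp: induced_def\<close>)
  with \<open>p \<noteq> []\<close> have "(induced E (- S))\<^sup>*\<^sup>* (hd p) (last p)" by (simp add: successively_rtranclp)
  then show ?thesis by (simp add: component_def)
qed

lemma component_path:
  assumes "x \<notin> S" "y \<in> component E S x"
  shows "\<exists>p. is_path E p \<and> hd p = x \<and> last p = y \<and> set p \<inter> S = {}"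
proof -
  have "y \<notin> S" using component_disjoint[OF assms(1)] assms(2) by blast
  from assms(2) have "(induced E (- S))\<^sup>*\<^sup>* x y" by (simp add: component_def)
  then show ?thesis
  proof (induction rule: converse_rtranclp_induct)
    case base
    with \<open>y \<notin> S\<close> show ?case by (intro exI[of _ "[y]"]) (simp add: is_path_def)
  next
    case (step x z)
    then obtain p where p: "is_path E p" "hd p = z" "last p = y" "set p \<inter> S = {}" by blast
    show ?case
    proof (cases "x \<in> set p")
      case True
      then obtain xs ys where xs: "p = xs @ x # ys" by (meson split_list)
      have "is_path E (x # ys)"
        using p(1) unfolding xs is_path_iff successively_append_iff by simp
      moreover have "last (x # ys) = y" "set (x # ys) \<inter> S = {}" using p(3,4) xs by auto
      ultimately show ?thesis by (intro exI[of _ "x # ys"]) simp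
    next
      case False
      have "E x z" "x \<notin> S" using step.hyps(1) by (simp_all add: induced_def)
      then have "is_path E (x # p)" using p(1,2) False by (auto simp: is_path_iff successively_Cons)
      moreover have "set (x # p) \<inter> S = {}" using p(4) \<open>x \<notin> S\<close> by simp
      ultimately show ?thesis using p(1,3) by (intro exI[of _ "x # p"]) (simp add: is_path_iff)
    qed
  qed
qed

lemma infinite_component_step:
  assumes "c \<notin> T" "infinite (component E T c)"
  obtains n where "E c n" "n \<notin> T" "infinite (component E (insert c T) n)"
proof -
  define N where "N = {n. E c n \<and> n \<notin> T}"
  have "finite N" unfolding N_def using finite_neighbours by simp
  have "component E T c \<subseteq> insert c (\<Union>n\<in>N. component E (insert c T) n)"
    using component_first_step[OF _ assms(1)] unfolding N_def by blast
  with assms(2) \<open>finite N\<close> obtain n where "n \<in> N" "infinite (component E (insert c T) n)"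
    by (metis (no_types, lifting) finite_UN finite_insert finite_subset)
  with that show ?thesis unfolding N_def by blast
qed

lemma infinite_component_has_ray:
  assumes x: "x \<notin> S" and infinite: "infinite (component E S x)"
  shows "\<exists>r. is_ray E r \<and> range r \<subseteq> component E S x"
proof -
  \<comment> \<open>In a state \<open>(c, V)\<close>, \<open>c\<close> is the tip of the ray built so far and \<open>V\<close> its vertex set;
    \<open>c\<close> must still reach infinitely many vertices avoiding \<open>S\<close> and the rest of \<open>V\<close>.\<close>
  define good where "good = (\<lambda>(c, V). finite V \<and> c \<in> V \<and> c \<in> component E S x \<and>
      infinite (component E (S \<union> (V - {c})) c))"
  define extends where "extends = (\<lambda>(c :: 'a, V) (c', V'). E c c' \<and> c' \<notin> V \<and> V' = insert c' V)"
  have step: "\<exists>st'. good st' \<and> extends st st'" if "good st" for st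
  proof -
    obtain c V where st: "st = (c, V)" by fastforce
    define T where "T = S \<union> (V - {c})"
    have c: "c \<in> V" "c \<in> component E S x" "infinite (component E T c)" "finite V"
      using that unfolding good_def st T_def by auto
    have "c \<notin> S" using c(2) component_disjoint[OF x] by blast
    then have "c \<notin> T" unfolding T_def by blast
    obtain n where n: "E c n" "n \<notin> T" "infinite (component E (insert c T) n)"
      using infinite_component_step[OF \<open>c \<notin> T\<close> c(3)] by blast
    have "n \<notin> V" "n \<notin> S" using n(1,2) adj_irrefl unfolding T_def by auto
    moreover have "S \<union> (insert n V - {n}) = insert c T" using c(1) \<open>n \<notin> V\<close> unfolding T_def by auto
    moreover have "n \<in> component E S x" using component_adj[OF x c(2) n(1)] \<open>n \<notin> S\<close> by blast
    ultimately have "good (n, insert n V) \<and> extends st (n, insert n V)"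
      using c(4) n unfolding good_def extends_def st by simp
    then show ?thesis by blast
  qed
  have "good (x, {x})" using infinite by (simp add: good_def component_self)
  then obtain f where f: "\<And>k. good (f k) \<and> extends (f k) (f (Suc k))"
    using dependent_nat_choice[of "\<lambda>_. good" "\<lambda>_. extends"] step by blast
  define r where "r k = fst (f k)" for k
  have r_in: "r k \<in> snd (f k)" "r k \<in> component E S x" for k
    using f[of k] unfolding r_def good_def by (auto split: prod.splits)
  have r_step: "E (r k) (r (Suc k))" "r (Suc k) \<notin> snd (f k)"
      "snd (f (Suc k)) = insert (r (Suc k)) (snd (f k))"
    for k using f[of k] unfolding r_def extends_def by (auto split: prod.splits)
  have mono: "snd (f j) \<subseteq> snd (f k)" if "j \<le> k" for j k
    using that by (induction k) (auto simp: le_Suc_eq r_step(3))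
  have "r j \<noteq> r k" if "j < k" for j k
    using that r_in(1)[of j] mono[of j "k - 1"] r_step(2)[of "k - 1"] by (cases k) auto
  then have "inj r" by (metis injI linorder_neqE_nat)
  with r_step(1) r_in(2) show ?thesis unfolding is_ray_def by blast
qed

end

definition graph_ball :: "('a \<Rightarrow> 'a \<Rightarrow> bool) \<Rightarrow> 'a set \<Rightarrow> nat \<Rightarrow> 'a set" where
  "graph_ball E K N = {v. \<exists>k\<in>K. \<exists>m\<le>N. (E ^^ m) k v}"

lemma graph_ball_self: "x \<in> K \<Longrightarrow> x \<in> graph_ball E K N"
  unfolding graph_ball_def by force

context lf_graph
begin

lemma finite_graph_ball: "finite K \<Longrightarrow> finite (graph_ball E K N)"
proof -
  assume "finite K"
  have "graph_ball E K N = (\<Union>k\<in>K. \<Union>m\<in>{..N}. {v. (E ^^ m) k v})"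
    unfolding graph_ball_def by auto
  with \<open>finite K\<close> show ?thesis by (simp add: finite_relpowp)
qed

lemma connected_on_graph_ball: "connected_on E (graph_ball E {x} N)"
proof (rule connected_onI[OF graph_ball_self])
  fix v assume "v \<in> graph_ball E {x} N"
  then obtain m where "(E ^^ m) x v" "m \<le> N" unfolding graph_ball_def by blast
  then show "(induced E (graph_ball E {x} N))\<^sup>*\<^sup>* x v"
  proof (induction m arbitrary: v)
    case (Suc m)
    then obtain u where u: "(E ^^ m) x u" "E u v" by (meson relpowp_Suc_E)
    have "m \<le> N" using Suc.prems(2) by simp
    with u(1) have "u \<in> graph_ball E {x} N" unfolding graph_ball_def by blast
    moreover have "v \<in> graph_ball E {x} N" using Suc.prems unfolding graph_ball_def by blast
    ultimately have "induced E (graph_ball E {x} N) u v" using u(2) by (simp add: induced_def)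
    with Suc.IH[OF u(1) \<open>m \<le> N\<close>] show ?case by (rule rtranclp.rtrancl_into_rtrancl)
  qed simp
qed simp

lemma walk_in_component:
  assumes "z \<notin> graph_ball E K N" "(E ^^ m) z w" "m \<le> N"
  shows "w \<in> component E K z"
  using assms(2,3)
proof (induction m arbitrary: w)
  case 0
  then show ?case by (simp add: component_self)
next
  case (Suc m)
  then obtain u where u: "(E ^^ m) z u" "E u w" by (meson relpowp_Suc_E)
  have z: "z \<notin> K" using assms(1) graph_ball_self[of z K E N] by blast
  have w: "w \<notin> K"
  proof
    assume "w \<in> K"
    moreover have "(E ^^ Suc m) w z" using Suc.prems(1) by (rule relpowp_sym)
    ultimately show False using assms(1) Suc.prems(2) unfolding graph_ball_def by blast
  qed
  have "u \<in> component E K z" using Suc.IH[OF u(1)] Suc.prems(2) by simp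
  from component_adj[OF z this u(2) w] show ?case .
qed

lemma walk_leaving_component:
  assumes "x \<notin> S" "v \<in> component E S x" "(E ^^ m) v k" "k \<notin> component E S x"
  shows "graph_ball E {v} m \<inter> S \<noteq> {}"
  using assms(3,4)
proof (induction m arbitrary: k)
  case 0
  with assms(2) show ?case by simp
next
  case (Suc m)
  then obtain u where u: "(E ^^ m) v u" "E u k" by (meson relpowp_Suc_E)
  show ?case
  proof (cases "u \<in> component E S x")
    case True
    have "k \<in> S"
    proof (rule ccontr)
      assume "k \<notin> S"
      with component_adj[OF assms(1) True u(2)] Suc.prems(2) show False by blast
    qed
    with Suc.prems(1) show ?thesis unfolding graph_ball_def by blast
  next
    case False
    with Suc.IH[OF u(1)] show ?thesis unfolding graph_ball_def by (auto intro: le_SucI)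
  qed
qed

end

locale connected_lf_graph = lf_graph +
  assumes connected: "connected_graph E"
begin

lemma walk_exists: "\<exists>m. (E ^^ m) u v"
  using connected by (simp add: connected_graph_def rtranclp_power)

lemma finite_subset_graph_ball:
  assumes "finite K"
  shows "\<exists>N. K \<subseteq> graph_ball E {x} N"
proof -
  obtain m where m: "\<And>k. (E ^^ m k) x k" using walk_exists by metis
  have "K \<subseteq> graph_ball E {x} (Max (m ` K))"
  proof
    fix k assume "k \<in> K"
    with assms have "m k \<le> Max (m ` K)" by simp
    with m[of k] show "k \<in> graph_ball E {x} (Max (m ` K))" unfolding graph_ball_def by blast
  qed
  then show ?thesis by blast
qed

lemma component_boundary_edge:
  assumes "x \<notin> S" "S \<noteq> {}"
  shows "\<exists>y z. y \<in> component E S x \<and> E y z \<and> z \<in> S"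
proof -
  obtain s where "s \<in> S" using assms(2) by blast
  from connected have "E\<^sup>*\<^sup>* x s" by (simp add: connected_graph_def)
  then show ?thesis using \<open>x \<notin> S\<close>
  proof (induction rule: converse_rtranclp_induct)
    case base
    with \<open>s \<in> S\<close> show ?case by simp
  next
    case (step x y)
    show ?case
    proof (cases "y \<in> S")
      case True
      with step.hyps(1) show ?thesis using component_self[of x E S] by blast
    next
      case False
      with step obtain y' z where "y' \<in> component E S y" "E y' z" "z \<in> S" by blast
      moreover have "y \<in> component E S x"
        using component_adj[OF step.prems component_self[of x E S] step.hyps(1) False] .
      ultimately show ?thesis using component_eq by blast
    qed
  qed
qed

lemma finite_components:
  assumes "finite S" "S \<noteq> {}"
  shows "finite (component E S ` (- S))"
proof -
  have "component E S ` (- S) \<subseteq> component E S ` (\<Union>z\<in>S. {y. E z y})"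
  proof
    fix C assume "C \<in> component E S ` (- S)"
    then obtain x where x: "x \<notin> S" "C = component E S x" by blast
    then obtain y z where yz: "y \<in> component E S x" "E y z" "z \<in> S"
      using component_boundary_edge assms(2) by blast
    then have "C = component E S y" using x component_eq by simp
    with yz show "C \<in> component E S ` (\<Union>z\<in>S. {y. E z y})" using adj_sym by blast
  qed
  moreover have "finite (\<Union>z\<in>S. {y. E z y})" using assms(1) finite_neighbours by blast
  ultimately show ?thesis using finite_surj by blast
qed

lemma infinite_component_meets:
  assumes "finite S" "S \<noteq> {}" "Z \<inter> S = {}" "infinite Z"
  shows "\<exists>z\<in>Z. infinite (component E S z)"
proof (rule ccontr)
  assume "\<not> ?thesis"
  then have "\<forall>C\<in>component E S ` Z. finite C" by blast
  moreover have "component E S ` Z \<subseteq> component E S ` (- S)" using assms(3) by blast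
  then have "finite (component E S ` Z)" using finite_components[OF assms(1,2)] finite_subset
    by blast
  ultimately have "finite (\<Union>(component E S ` Z))" by (intro finite_Union) auto
  moreover have "Z \<subseteq> \<Union>(component E S ` Z)" using component_self[of _ E S] by blast
  ultimately show False using assms(4) finite_subset by blast
qed

lemma connected_on_Un_component:
  assumes "connected_on E K" "K \<noteq> {}" "b \<notin> K"
  shows "connected_on E (K \<union> component E K b)"
proof -
  obtain y z where "y \<in> component E K b" "E y z" "z \<in> K"
    using component_boundary_edge assms(2,3) by blast
  then show ?thesis
    using connected_on_Un[OF connected_on_component[OF assms(3)] assms(1)] by (metis sup_commute)
qed

lemma finite_if_components_finite:
  assumes "finite K0" "K0 \<noteq> {}" and finite: "\<And>y. y \<in> K \<Longrightarrow> y \<notin> K0 \<Longrightarrow> finite (component E K0 y)"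
  shows "finite K"
proof -
  have "component E K0 ` (K - K0) \<subseteq> component E K0 ` (- K0)" by blast
  then have "finite (component E K0 ` (K - K0))" using finite_components[OF assms(1,2)]
    by (rule finite_subset)
  then have "finite (\<Union>(component E K0 ` (K - K0)))" using finite by (intro finite_Union) auto
  moreover have "K \<subseteq> K0 \<union> \<Union>(component E K0 ` (K - K0))" using component_self[of _ E K0] by blast
  ultimately show ?thesis using assms(1) by (meson finite_UnI finite_subset)
qed

lemma connected_on_absorb_components:
  assumes K0: "connected_on E K0" "K0 \<noteq> {}" "K0 \<subseteq> K"
    and absorbed: "\<And>y. y \<in> K \<Longrightarrow> y \<notin> K0 \<Longrightarrow> component E K0 y \<subseteq> K"
  shows "connected_on E K"
proof -
  obtain x0 where "x0 \<in> K0" using K0(2) by blast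
  show ?thesis
  proof (rule connected_onI[of x0])
    show "x0 \<in> K" using \<open>x0 \<in> K0\<close> K0(3) by blast
    fix y assume "y \<in> K"
    show "(induced E K)\<^sup>*\<^sup>* x0 y"
    proof (cases "y \<in> K0")
      case True
      with K0(1) \<open>x0 \<in> K0\<close> have "(induced E K0)\<^sup>*\<^sup>* x0 y" by (simp add: connected_on_def)
      then show ?thesis using K0(3) by (rule induced_rtranclp_mono)
    next
      case False
      have "connected_on E (K0 \<union> component E K0 y)"
        by (rule connected_on_Un_component[OF K0(1,2) False])
      moreover have "y \<in> component E K0 y" by (rule component_self)
      ultimately have "(induced E (K0 \<union> component E K0 y))\<^sup>*\<^sup>* x0 y"
        using \<open>x0 \<in> K0\<close> by (simp add: connected_on_def)
      moreover have "K0 \<union> component E K0 y \<subseteq> K" using K0(3) absorbed[OF \<open>y \<in> K\<close> False] by blast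
      ultimately show ?thesis by (rule induced_rtranclp_mono)
    qed
  qed
qed

end

section \<open>Rays and ends\<close>

lemma equiv_rays_refl:
  assumes "is_ray E r"
  shows "equiv_rays E r r"
proof -
  have "inj (\<lambda>n. [r n])" using assms by (simp add: is_ray_def inj_def)
  then have "infinite (range (\<lambda>n. [r n]))" using finite_imageD infinite_UNIV_nat by blast
  then show ?thesis unfolding equiv_rays_def
    by (intro exI[of _ "range (\<lambda>n. [r n])"]) (auto simp: is_path_def)
qed

lemma finite_separator_if_not_equiv_rays:
  assumes "\<not> equiv_rays E r s"
  shows "\<exists>U. finite U \<and> (\<forall>p. is_path E p \<and> hd p \<in> range r \<and> last p \<in> range s \<longrightarrow> set p \<inter> U \<noteq> {})"
proof (rule ccontr)
  let ?joins = "\<lambda>p. is_path E p \<and> hd p \<in> range r \<and> last p \<in> range s"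
  assume "\<not> ?thesis"
  then have avoid: "\<exists>p. ?joins p \<and> set p \<inter> U = {}" if "finite U" for U using that by blast
  define path where "path U = (SOME p. ?joins p \<and> set p \<inter> U = {})" for U
  define used where "used = rec_nat {} (\<lambda>_ U. U \<union> set (path U))"
  have used_Suc: "used (Suc n) = used n \<union> set (path (used n))" for n by (simp add: used_def)
  have "finite (used n)" for n by (induction n) (simp_all add: used_def)
  then have path: "?joins (path (used n))" "set (path (used n)) \<inter> used n = {}" for n
    unfolding path_def using someI_ex[OF avoid] by blast+
  have used_mono: "used m \<subseteq> used n" if "m \<le> n" for m n
    using that by (induction n) (auto simp: used_Suc le_Suc_eq)
  have disjoint_less: "set (path (used m)) \<inter> set (path (used n)) = {}" if "m < n" for m n
    using path(2)[of n] used_mono[of "Suc m" n] that by (auto simp: used_Suc)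
  then have disjoint: "set (path (used m)) \<inter> set (path (used n)) = {}" if "m \<noteq> n" for m n
    using that by (metis Int_commute linorder_neqE_nat)
  have "inj (\<lambda>n. path (used n))"
  proof (rule injI)
    fix m n assume "path (used m) = path (used n)"
    moreover have "path (used m) \<noteq> []" using path(1) by (simp add: is_path_def)
    ultimately show "m = n" using disjoint by fastforce
  qed
  then have "infinite (range (\<lambda>n. path (used n)))" using finite_imageD infinite_UNIV_nat by blast
  moreover have "set p \<inter> set q = {}"
    if "p \<in> range (\<lambda>n. path (used n))" "q \<in> range (\<lambda>n. path (used n))" "p \<noteq> q" for p q
  proof -
    from that(1,2) obtain m n where pq: "p = path (used m)" "q = path (used n)" by blast
    with that(3) have "m \<noteq> n" by auto
    with disjoint pq show ?thesis by simp
  qed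
  ultimately have "equiv_rays E r s" using path(1) unfolding equiv_rays_def
    by (intro exI[of _ "range (\<lambda>n. path (used n))"]) blast
  with assms show False ..
qed

lemma ray_class_in_ends:
  assumes "is_ray E r"
  shows "{s. is_ray E s \<and> equiv_rays E r s} \<in> ends E"
proof -
  let ?R = "{(r, s). is_ray E r \<and> is_ray E s \<and> equiv_rays E r s}"
  have "?R `` {r} \<in> {r. is_ray E r} // ?R" using assms by (intro quotientI) simp
  moreover have "?R `` {r} = {s. is_ray E s \<and> equiv_rays E r s}" using assms by auto
  ultimately show ?thesis unfolding ends_def by simp
qed

lemma ray_classes_differ:
  assumes "is_ray E s" "\<not> equiv_rays E r s"
  shows "{s'. is_ray E s' \<and> equiv_rays E r s'} \<noteq> {s'. is_ray E s' \<and> equiv_rays E s s'}"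
  using assms equiv_rays_refl by blast

context lf_graph
begin

lemma ray_tail_in_component:
  assumes "is_ray E r" "\<forall>m\<ge>n. r m \<notin> S" "n \<le> m"
  shows "r m \<in> component E S (r n)"
  using assms(3)
proof (induction m rule: dec_induct)
  case base
  show ?case by (rule component_self)
next
  case (step m)
  have "E (r m) (r (Suc m))" using assms(1) by (simp add: is_ray_def)
  with step assms(2) show ?case using component_adj[of "r n" S "r m"] by simp
qed

lemma ray_tail_component:
  assumes r: "is_ray E r" and "finite S"
  obtains n where "r n \<notin> S" "infinite (component E S (r n))"
proof -
  have "finite (r -` S)" using assms by (simp add: is_ray_def finite_vimageI)
  then obtain n where n: "\<forall>m\<ge>n. r m \<notin> S" by (meson finite_nat_set_iff_bounded leD vimageI)
  then have "r ` {n..} \<subseteq> component E S (r n)" using ray_tail_in_component[OF r] by auto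
  moreover have "infinite (r ` {n..})"
    using r infinite_Ici[of n] finite_imageD[of r "{n..}"] by (auto simp: is_ray_def inj_on_def)
  ultimately have "infinite (component E S (r n))" using finite_subset by blast
  with n that show ?thesis by blast
qed

lemma not_equiv_rays_if_separated:
  assumes "finite S" and r: "range r \<subseteq> component E S x" and s: "range s \<subseteq> component E S y"
    and ne: "component E S x \<noteq> component E S y"
  shows "\<not> equiv_rays E r s"
proof
  assume "equiv_rays E r s"
  then obtain P where "infinite P" "\<forall>p\<in>P. is_path E p \<and> hd p \<in> range r \<and> last p \<in> range s"
    "\<forall>p\<in>P. \<forall>q\<in>P. p \<noteq> q \<longrightarrow> set p \<inter> set q = {}"
    unfolding equiv_rays_def by blast
  then have P: "infinite P" "\<And>p. p \<in> P \<Longrightarrow> is_path E p \<and> hd p \<in> range r \<and> last p \<in> range s"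
    "\<And>p q. p \<in> P \<Longrightarrow> q \<in> P \<Longrightarrow> p \<noteq> q \<Longrightarrow> set p \<inter> set q = {}"
    by blast+
  \<comment> \<open>The disjoint paths meeting \<open>S\<close> are determined by where they meet it.\<close>
  let ?Q = "{p \<in> P. set p \<inter> S \<noteq> {}}"
  have "inj_on (\<lambda>p. set p \<inter> S) ?Q"
  proof (rule inj_onI)
    fix p q assume "p \<in> ?Q" "q \<in> ?Q" "set p \<inter> S = set q \<inter> S"
    then have "set p \<inter> set q \<noteq> {}" by blast
    with P(3) \<open>p \<in> ?Q\<close> \<open>q \<in> ?Q\<close> show "p = q" by blast
  qed
  moreover have "finite ((\<lambda>p. set p \<inter> S) ` ?Q)"
    by (rule finite_subset[of _ "Pow S"]) (auto simp: \<open>finite S\<close>)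
  ultimately have "finite ?Q" using finite_imageD by blast
  then have "P \<noteq> ?Q" using P(1) by metis
  then obtain p where p: "p \<in> P" "set p \<inter> S = {}" by blast
  have "hd p \<in> component E S x" "last p \<in> component E S y" using P(2)[OF p(1)] r s by auto
  then have "component E S (hd p) = component E S x" "component E S (last p) = component E S y"
    by (simp_all add: component_eq)
  moreover have "last p \<in> component E S (hd p)" using P(2)[OF p(1)] p(2)
    by (simp add: path_in_component)
  ultimately show False using ne component_eq[of "last p" S "hd p"] by simp
qed

end

locale two_ended_graph = connected_lf_graph +
  assumes two_ends: "card (ends E) = 2"
begin

lemma inequivalent_rays_exist: "\<exists>r s. is_ray E r \<and> is_ray E s \<and> \<not> equiv_rays E r s"
proof (rule ccontr)
  assume all: "\<not> ?thesis"
  have "ends E \<subseteq> {{s. is_ray E s}}"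
  proof
    fix X assume "X \<in> ends E"
    then obtain r where
      "is_ray E r" "X = {(r, s). is_ray E r \<and> is_ray E s \<and> equiv_rays E r s} `` {r}"
      unfolding ends_def by (auto elim: quotientE)
    with all have "X = {s. is_ray E s}" by blast
    then show "X \<in> {{s. is_ray E s}}" by simp
  qed
  then have "card (ends E) \<le> 1" using card_mono[of "{{s. is_ray E s}}"] by simp
  with two_ends show False by simp
qed

lemma no_three_inequivalent_rays:
  assumes "is_ray E r1" "is_ray E r2" "is_ray E r3"
    and "\<not> equiv_rays E r1 r2" "\<not> equiv_rays E r1 r3" "\<not> equiv_rays E r2 r3"
  shows False
proof -
  let ?class = "\<lambda>r. {s. is_ray E s \<and> equiv_rays E r s}"
  have "?class r1 \<noteq> ?class r2" "?class r1 \<noteq> ?class r3" "?class r2 \<noteq> ?class r3"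
    using ray_classes_differ[OF assms(2,4)] ray_classes_differ[OF assms(3,5)]
      ray_classes_differ[OF assms(3,6)] .
  then have "card {?class r1, ?class r2, ?class r3} = 3" by simp
  moreover have "card {?class r1, ?class r2, ?class r3} \<le> card (ends E)"
  proof (rule card_mono)
    show "finite (ends E)" using two_ends by (intro card_ge_0_finite) simp
    show "{?class r1, ?class r2, ?class r3} \<subseteq> ends E"
      using assms(1-3) by (simp add: ray_class_in_ends)
  qed
  ultimately show False using two_ends by simp
qed

lemma no_three_infinite_components:
  assumes "finite S" and notin: "x1 \<notin> S" "x2 \<notin> S" "x3 \<notin> S"
    and infinite: "infinite (component E S x1)" "infinite (component E S x2)"
      "infinite (component E S x3)"
    and ne: "component E S x1 \<noteq> component E S x2" "component E S x1 \<noteq> component E S x3"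
      "component E S x2 \<noteq> component E S x3"
  shows False
proof -
  obtain r1 where r1: "is_ray E r1" "range r1 \<subseteq> component E S x1"
    using infinite_component_has_ray[OF notin(1) infinite(1)] by blast
  obtain r2 where r2: "is_ray E r2" "range r2 \<subseteq> component E S x2"
    using infinite_component_has_ray[OF notin(2) infinite(2)] by blast
  obtain r3 where r3: "is_ray E r3" "range r3 \<subseteq> component E S x3"
    using infinite_component_has_ray[OF notin(3) infinite(3)] by blast
  show False
    using no_three_inequivalent_rays[OF r1(1) r2(1) r3(1)]
      not_equiv_rays_if_separated[OF \<open>finite S\<close> r1(2) r2(2) ne(1)]
      not_equiv_rays_if_separated[OF \<open>finite S\<close> r1(2) r3(2) ne(2)]
      not_equiv_rays_if_separated[OF \<open>finite S\<close> r2(2) r3(2) ne(3)] by blast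
qed

lemma third_component_finite:
  assumes "finite S" "a \<notin> S" "b \<notin> S" "y \<notin> S" "component E S a \<noteq> component E S b"
    "infinite (component E S a)" "infinite (component E S b)"
    "y \<notin> component E S a" "y \<notin> component E S b"
  shows "finite (component E S y)"
proof (rule ccontr)
  assume "infinite (component E S y)"
  moreover have "component E S y \<noteq> component E S a" "component E S y \<noteq> component E S b"
    using assms(8,9) component_self[of y E S] by auto
  ultimately show False using no_three_infinite_components[OF assms(1,4,2,3)] assms(5-7) by blast
qed

end

section \<open>Two-ended quasi-transitive graphs have a translation\<close>

locale two_ended_cut = two_ended_graph +
  fixes K :: "'a set" and a b :: 'a
  assumes finite_K: "finite K" and K_nonempty: "K \<noteq> {}"
    and a_notin_K: "a \<notin> K" and b_notin_K: "b \<notin> K"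
    and components_differ: "component E K a \<noteq> component E K b"
    and infinite_A: "infinite (component E K a)" and infinite_B: "infinite (component E K b)"
    and covers: "K \<union> component E K a \<union> component E K b = UNIV"
    and connected_K_A: "connected_on E (K \<union> component E K a)"
    and connected_K_B: "connected_on E (K \<union> component E K b)"

context two_ended_graph
begin

lemma finite_connected_separator:
  obtains K a b where "finite K" "K \<noteq> {}" "connected_on E K" "a \<notin> K" "b \<notin> K"
    "component E K a \<noteq> component E K b" "infinite (component E K a)" "infinite (component E K b)"
proof -
  obtain r s where rs: "is_ray E r" "is_ray E s" "\<not> equiv_rays E r s"
    using inequivalent_rays_exist by blast
  obtain U where U: "finite U"
    "\<And>p. is_path E p \<Longrightarrow> hd p \<in> range r \<Longrightarrow> last p \<in> range s \<Longrightarrow> set p \<inter> U \<noteq> {}"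
    using finite_separator_if_not_equiv_rays[OF rs(3)] by blast
  obtain N where "U \<subseteq> graph_ball E {r 0} N" using finite_subset_graph_ball[OF U(1)] by blast
  define K where "K = graph_ball E {r 0} N"
  have K: "finite K" "K \<noteq> {}" "connected_on E K"
    unfolding K_def
      using finite_graph_ball graph_ball_self[of "r 0" "{r 0}" E N] connected_on_graph_ball
    by auto
  obtain n where n: "r n \<notin> K" "infinite (component E K (r n))"
    using ray_tail_component[OF rs(1) K(1)] by blast
  obtain m where m: "s m \<notin> K" "infinite (component E K (s m))"
    using ray_tail_component[OF rs(2) K(1)] by blast
  have "component E K (r n) \<noteq> component E K (s m)"
  proof
    assume "component E K (r n) = component E K (s m)"
    then have "s m \<in> component E K (r n)" using component_self[of "s m" E K] by simp
    then obtain p where p: "is_path E p" "hd p = r n" "last p = s m" "set p \<inter> K = {}"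
      using component_path[OF n(1)] by blast
    have "set p \<inter> U = {}" using p(4) \<open>U \<subseteq> graph_ball E {r 0} N\<close> unfolding K_def by blast
    with U(2)[OF p(1)] p(2,3) show False by simp
  qed
  with K n m that show ?thesis by blast
qed

lemma two_ended_cutI:
  assumes "finite K" "K \<noteq> {}" "connected_on E K" "a \<notin> K" "b \<notin> K"
    "component E K a \<noteq> component E K b" "infinite (component E K a)" "infinite (component E K b)"
    "K \<union> component E K a \<union> component E K b = UNIV"
  shows "two_ended_cut E K a b"
proof (intro two_ended_cut.intro[OF two_ended_graph_axioms] two_ended_cut_axioms.intro)
  show "connected_on E (K \<union> component E K a)" "connected_on E (K \<union> component E K b)"
    using connected_on_Un_component[OF assms(3,2)] assms(4,5) by blast+
qed (fact assms)+

lemma two_ended_cut_exists: "\<exists>K a b. two_ended_cut E K a b"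
proof -
  obtain K0 a b where K0: "finite K0" "K0 \<noteq> {}" "connected_on E K0"
    and ab: "a \<notin> K0" "b \<notin> K0" "component E K0 a \<noteq> component E K0 b"
      "infinite (component E K0 a)" "infinite (component E K0 b)"
    using finite_connected_separator by blast
  define A where "A = component E K0 a"
  define B where "B = component E K0 b"
  define K where "K = - (A \<union> B)"
  have "A \<inter> K0 = {}" "B \<inter> K0 = {}"
    unfolding A_def B_def using ab(1,2) by (simp_all add: component_disjoint)
  then have "K0 \<subseteq> K" unfolding K_def by blast
  have other: "component E K0 y \<subseteq> K" "finite (component E K0 y)" if "y \<in> K" "y \<notin> K0" for y
  proof -
    have "y \<notin> A" "y \<notin> B" using that(1) unfolding K_def by auto
    then have "component E K0 y \<noteq> A" "component E K0 y \<noteq> B"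
      using component_self[of y E K0] by auto
    then show "component E K0 y \<subseteq> K"
      unfolding K_def A_def B_def using component_disjoint_if_ne by blast
    show "finite (component E K0 y)"
      using third_component_finite[OF K0(1) ab(1,2) that(2) ab(3-5)] \<open>y \<notin> A\<close> \<open>y \<notin> B\<close>
      unfolding A_def B_def by blast
  qed
  have "finite K" using finite_if_components_finite[OF K0(1,2) other(2)] .
  have "connected_on E K" using connected_on_absorb_components[OF K0(3,2) \<open>K0 \<subseteq> K\<close> other(1)] .
  have "A \<inter> K = {}" "B \<inter> K = {}" unfolding K_def by blast+
  then have A: "component E K a = A" and B: "component E K b = B"
    using component_Un_disjoint[OF ab(1), of K] component_Un_disjoint[OF ab(2), of K] \<open>K0 \<subseteq> K\<close>
    unfolding A_def B_def by (simp_all add: sup.absorb2)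
  have "a \<in> A" "b \<in> B" unfolding A_def B_def by (simp_all add: component_self)
  have "a \<notin> K" "b \<notin> K" "K \<noteq> {}"
    using \<open>a \<in> A\<close> \<open>b \<in> B\<close> \<open>K0 \<subseteq> K\<close> K0(2) unfolding K_def by auto
  have "K \<union> A \<union> B = UNIV" unfolding K_def by blast
  have "two_ended_cut E K a b"
  proof (rule two_ended_cutI)
    show "component E K a \<noteq> component E K b"
      "infinite (component E K a)" "infinite (component E K b)"
      unfolding A B A_def B_def by (fact ab)+
    show "K \<union> component E K a \<union> component E K b = UNIV"
      unfolding A B by fact
  qed fact+
  then show ?thesis by blast
qed

end

context connected_lf_graph
begin

lemma not_in_all_funpow_images:
  assumes s: "s \<in> automorphisms E" and x: "x \<notin> K" and "K \<noteq> {}"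
    and s_into: "s ` component E K x \<subseteq> component E K x"
    and disjoint: "\<And>m n. m < n \<Longrightarrow> (s ^^ m) ` K \<inter> (s ^^ n) ` K = {}"
  shows "\<exists>n. v \<notin> (s ^^ n) ` component E K x"
proof (rule ccontr)
  assume "\<nexists>n. v \<notin> (s ^^ n) ` component E K x"
  then have v: "v \<in> (s ^^ n) ` component E K x" for n by blast
  obtain k where "k \<in> K" using \<open>K \<noteq> {}\<close> by blast
  obtain m where walk: "(E ^^ m) v k" using walk_exists by blast
  \<comment> \<open>A walk from \<open>v\<close> to \<open>K\<close> must cross every translate \<open>(s ^^ n) ` K\<close>, and these are disjoint.\<close>
  define meet where "meet n = graph_ball E {v} m \<inter> (s ^^ n) ` K" for n
  have "meet n \<noteq> {}" for n
  proof -
    have sn: "s ^^ n \<in> automorphisms E" using s by (rule funpow_automorphism)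
    then have "inj (s ^^ n)" by (simp add: automorphism_bij bij_is_inj)
    then have xn: "(s ^^ n) x \<notin> (s ^^ n) ` K" using x by (simp add: inj_image_mem_iff)
    have image: "(s ^^ n) ` component E K x = component E ((s ^^ n) ` K) ((s ^^ n) x)"
      using sn by (rule component_automorphism)
    have "v \<in> component E ((s ^^ n) ` K) ((s ^^ n) x)" using v[of n] image by simp
    moreover have "k \<notin> component E ((s ^^ n) ` K) ((s ^^ n) x)"
      using funpow_image_subset[OF s_into, of n] component_disjoint[OF x] \<open>k \<in> K\<close> image by blast
    ultimately show ?thesis
      using walk_leaving_component[OF xn _ walk] unfolding meet_def by blast
  qed
  moreover have "meet i \<inter> meet j = {}" if "i < j" for i j
    using disjoint[OF that] unfolding meet_def by blast
  ultimately have "inj meet"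
    by (metis inf.idem linorder_neqE_nat injI)
  moreover have "range meet \<subseteq> Pow (graph_ball E {v} m)" unfolding meet_def by blast
  then have "finite (range meet)" using finite_graph_ball[of "{v}" m] by (simp add: finite_subset)
  ultimately show False using finite_imageD infinite_UNIV_nat by blast
qed

lemma automorphism_into_component:
  assumes "quasi_transitive E" "finite K" and infinite: "infinite (component E K a)"
  shows "\<exists>g\<in>automorphisms E. g ` K \<subseteq> component E K a"
proof -
  let ?C = "component E K a"
  define orbit where "orbit v = {f v |f. f \<in> automorphisms E}" for v
  have "finite (range orbit)"
    using assms(1) unfolding quasi_transitive_def finitely_many_orbits_def orbit_def .
  have "\<exists>y. infinite (orbit y \<inter> ?C)"
  proof (rule ccontr)
    assume "\<nexists>y. infinite (orbit y \<inter> ?C)"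
    then have "finite (\<Union>X\<in>range orbit. X \<inter> ?C)"
      using \<open>finite (range orbit)\<close> by (intro finite_UN_I) auto
    moreover have "v \<in> orbit v" for v
      unfolding orbit_def using id_automorphism[of E]
        by (metis (mono_tags, lifting) id_apply mem_Collect_eq)
    then have "?C \<subseteq> (\<Union>X\<in>range orbit. X \<inter> ?C)" by blast
    ultimately show False using infinite finite_subset by blast
  qed
  then obtain y where "infinite (orbit y \<inter> ?C)" by blast
  obtain N where N: "K \<subseteq> graph_ball E {y} N" using finite_subset_graph_ball[OF assms(2)] by blast
  have "infinite (orbit y \<inter> ?C - graph_ball E K N)"
    using \<open>infinite (orbit y \<inter> ?C)\<close> finite_graph_ball[OF assms(2)] by simp
  then obtain z where z: "z \<in> orbit y" "z \<in> ?C" "z \<notin> graph_ball E K N"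
    using infinite_imp_nonempty by blast
  then obtain f where f: "f \<in> automorphisms E" "z = f y" unfolding orbit_def by blast
  have "f ` K \<subseteq> ?C"
  proof
    fix w assume "w \<in> f ` K"
    then obtain k where "k \<in> K" "w = f k" by blast
    with N obtain m where "m \<le> N" "(E ^^ m) y k" unfolding graph_ball_def by blast
    then have "(E ^^ m) z w" using automorphism_relpowp[OF f(1)] f(2) \<open>w = f k\<close> by simp
    then have "w \<in> component E K z" using walk_in_component[OF z(3)] \<open>m \<le> N\<close> by blast
    then show "w \<in> ?C" using component_eq[OF z(2)] by simp
  qed
  with f(1) show ?thesis by blast
qed

end

context two_ended_cut
begin

abbreviation "A \<equiv> component E K a"
abbreviation "B \<equiv> component E K b"

lemma two_ended_cut_swap: "two_ended_cut E K b a"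
  using finite_K K_nonempty b_notin_K a_notin_K components_differ infinite_A infinite_B
    covers connected_K_A connected_K_B
  by (intro two_ended_cut.intro[OF two_ended_graph_axioms] two_ended_cut_axioms.intro)
    (simp_all add: Un_ac)

lemma sides_disjoint: "A \<inter> B = {}"
  using components_differ by (rule component_disjoint_if_ne)

lemma K_disjoint_sides: "K \<inter> A = {}" "K \<inter> B = {}"
  using component_disjoint[OF a_notin_K] component_disjoint[OF b_notin_K] by blast+

lemma image_covers:
  assumes "bij g"
  shows "g ` K \<union> g ` A \<union> g ` B = UNIV"
  using covers bij_is_surj[OF assms] by (metis image_Un)

lemma K_B_subset_image:
  assumes g: "g \<in> automorphisms E" and disjoint: "g ` K \<inter> (K \<union> B) = {}"
    and "x \<notin> K" and b: "b \<in> g ` component E K x"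
  shows "K \<union> B \<subseteq> g ` component E K x"
proof -
  have image: "g ` component E K x = component E (g ` K) (g x)"
    by (rule component_automorphism[OF g])
  with b have "component E (g ` K) b = component E (g ` K) (g x)" by (simp add: component_eq)
  moreover have "(K \<union> B) \<inter> g ` K = {}" using disjoint by blast
  moreover have "b \<in> K \<union> B" using component_self[of b E K] by blast
  ultimately show ?thesis using connected_on_subset_component[OF connected_K_B] image by metis
qed

lemma automorphism_side_cases:
  assumes g: "g \<in> automorphisms E" and gK: "g ` K \<subseteq> A"
  shows "g ` A \<subseteq> A \<or> g ` B \<subseteq> A"
proof -
  have "bij g" using g by (rule automorphism_bij)
  have disjoint: "g ` K \<inter> (K \<union> B) = {}" using gK K_disjoint_sides sides_disjoint by blast
  have "g ` A \<inter> g ` B = {}" using sides_disjoint \<open>bij g\<close>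
    by (simp add: bij_is_inj image_Int[symmetric])
  have "b \<in> B" by (rule component_self)
  then have "b \<notin> g ` K" using gK sides_disjoint by blast
  then consider "b \<in> g ` A" | "b \<in> g ` B" using image_covers[OF \<open>bij g\<close>] by blast
  then show ?thesis
  proof cases
    case 1
    then have "K \<union> B \<subseteq> g ` A" by (rule K_B_subset_image[OF g disjoint a_notin_K])
    then have "g ` B \<subseteq> A" using \<open>g ` A \<inter> g ` B = {}\<close> covers by blast
    then show ?thesis ..
  next
    case 2
    then have "K \<union> B \<subseteq> g ` B" by (rule K_B_subset_image[OF g disjoint b_notin_K])
    then have "g ` A \<subseteq> A" using \<open>g ` A \<inter> g ` B = {}\<close> covers by blast
    then show ?thesis ..
  qed
qed

end

locale cut_translation = two_ended_cut +
  fixes t :: "'a \<Rightarrow> 'a"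
  assumes t_automorphism: "t \<in> automorphisms E"
    and t_A: "t ` component E K a \<subseteq> component E K a"
    and t_K: "t ` K \<subseteq> component E K a"
begin

lemma bij_t: "bij t"
  using t_automorphism by (rule automorphism_bij)

lemma t_sides_disjoint: "t ` A \<inter> t ` B = {}"
  using sides_disjoint bij_t by (simp add: bij_is_inj image_Int[symmetric])

lemma K_B_subset_t_B: "K \<union> B \<subseteq> t ` B"
proof (rule K_B_subset_image[OF t_automorphism _ b_notin_K])
  show "t ` K \<inter> (K \<union> B) = {}" using t_K K_disjoint_sides sides_disjoint by blast
  have "b \<in> B" by (rule component_self)
  then have "b \<notin> t ` K" "b \<notin> t ` A" using t_K t_A sides_disjoint by blast+
  then show "b \<in> t ` B" using image_covers[OF bij_t] by blast
qed

lemma funpow_t_K_disjoint: "m < n \<Longrightarrow> (t ^^ m) ` K \<inter> (t ^^ n) ` K = {}"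
  using K_B_subset_t_B K_disjoint_sides(2) by (intro funpow_images_disjoint[OF bij_t]) blast+

lemma escapes_A: "\<exists>n. v \<notin> (t ^^ n) ` A"
  by (rule not_in_all_funpow_images[OF t_automorphism a_notin_K K_nonempty t_A funpow_t_K_disjoint])

lemma enters_A: "\<exists>n. v \<in> (inv t ^^ n) ` A"
proof -
  let ?s = "inv t"
  have s: "?s \<in> automorphisms E" using t_automorphism by (rule inv_automorphism)
  have s_t: "?s (t w) = w" for w using bij_t by (simp add: bij_is_inj)
  have s_B: "?s ` B \<subseteq> B" using K_B_subset_t_B s_t by force
  have preimage: "X \<subseteq> ?s ` A" if "t ` X \<subseteq> A" for X
  proof
    fix x assume "x \<in> X"
    with that have "?s (t x) \<in> ?s ` A" by blast
    then show "x \<in> ?s ` A" by (simp only: s_t)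
  qed
  have "K \<subseteq> ?s ` A" "A \<subseteq> ?s ` A" using preimage t_K t_A by blast+
  then have "(?s ^^ m) ` K \<inter> (?s ^^ n) ` K = {}" if "m < n" for m n
    using K_disjoint_sides(1) funpow_images_disjoint[OF bij_imp_bij_inv[OF bij_t]] that by blast
  from not_in_all_funpow_images[OF s b_notin_K K_nonempty s_B this]
  obtain n where "v \<notin> (?s ^^ n) ` B" by blast
  moreover have "bij (?s ^^ n)" using bij_imp_bij_inv[OF bij_t] by (rule bij_betw_funpow)
  then have "v = (?s ^^ n) (inv (?s ^^ n) v)" by (simp add: bij_is_surj surj_f_inv_f)
  ultimately have "inv (?s ^^ n) v \<in> K \<union> A" using covers by blast
  with \<open>K \<subseteq> ?s ` A\<close> \<open>A \<subseteq> ?s ` A\<close> \<open>v = (?s ^^ n) (inv (?s ^^ n) v)\<close>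
  have "v \<in> (?s ^^ n) ` ?s ` A" by blast
  then have "v \<in> (?s ^^ Suc n) ` A" by (simp only: funpow_Suc_right image_comp)
  then show ?thesis by blast
qed

lemma t_image_sides: "t ` A = component E (t ` K) (t a)" "t ` B = component E (t ` K) (t b)"
  using component_automorphism[OF t_automorphism] by blast+

lemma component_b: "component E (K \<union> t ` K) b = B"
proof -
  have "B \<inter> t ` K = {}" using t_K sides_disjoint by blast
  then show ?thesis by (rule component_Un_disjoint[OF b_notin_K])
qed

lemma component_t_a: "component E (K \<union> t ` K) (t a) = t ` A"
proof -
  have "t a \<notin> t ` K" using a_notin_K bij_t by (simp add: bij_is_inj inj_image_mem_iff)
  moreover have "component E (t ` K) (t a) \<inter> K = {}"
    using t_image_sides(1) t_A K_disjoint_sides(1) by blast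
  ultimately have "component E (t ` K \<union> K) (t a) = component E (t ` K) (t a)"
    by (rule component_Un_disjoint)
  then show ?thesis using t_image_sides(1) by (simp add: Un_commute)
qed

lemma finite_A_inter_t_B: "finite (A \<inter> t ` B)"
proof (rule ccontr)
  assume "infinite (A \<inter> t ` B)"
  define S where "S = K \<union> t ` K"
  have "finite S" "S \<noteq> {}" unfolding S_def using finite_K K_nonempty by auto
  have "t ` K \<inter> t ` A = {}" "t ` K \<inter> t ` B = {}"
    using K_disjoint_sides bij_t by (simp_all add: bij_is_inj image_Int[symmetric])
  then have "(A \<inter> t ` B) \<inter> S = {}" using K_disjoint_sides unfolding S_def by blast
  then obtain z where z: "z \<in> A \<inter> t ` B" "infinite (component E S z)"
    using infinite_component_meets[OF \<open>finite S\<close> \<open>S \<noteq> {}\<close>] \<open>infinite (A \<inter> t ` B)\<close> by blast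
  \<comment> \<open>Then \<open>G - S\<close> has three infinite components: this one, \<open>B\<close> and \<open>t ` A\<close>.\<close>
  have "z \<notin> S" using z(1) \<open>(A \<inter> t ` B) \<inter> S = {}\<close> by blast
  have "component E S z \<subseteq> A \<inter> t ` B"
  proof -
    have "component E S z \<subseteq> component E K z" "component E S z \<subseteq> component E (t ` K) z"
      unfolding S_def by (simp_all add: component_antimono)
    moreover have "component E K z = A" "component E (t ` K) z = t ` B"
      using z(1) t_image_sides by (simp_all add: component_eq)
    ultimately show ?thesis by blast
  qed
  have "b \<in> B" "t a \<in> t ` A" using component_self[of b E K] component_self[of a E K] by blast+
  moreover have "B \<inter> S = {}" using K_disjoint_sides(2) t_K sides_disjoint unfolding S_def by blast
  moreover have "t ` A \<inter> S = {}"
    using t_A K_disjoint_sides(1) \<open>t ` K \<inter> t ` A = {}\<close> unfolding S_def by blast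
  ultimately have "b \<notin> S" "t a \<notin> S" by blast+
  have "infinite (t ` A)"
    using infinite_A finite_imageD inj_on_subset[OF bij_is_inj[OF bij_t] subset_UNIV] by blast
  have "z \<notin> B" "z \<notin> t ` A" "b \<notin> t ` A" using z(1) sides_disjoint t_sides_disjoint t_A \<open>b \<in> B\<close>
    by blast+
  then have "component E S z \<noteq> component E S b" "component E S z \<noteq> component E S (t a)"
      "component E S b \<noteq> component E S (t a)"
    using component_self[of z E S] \<open>b \<in> B\<close> unfolding S_def component_b component_t_a by auto
  with no_three_infinite_components[OF \<open>finite S\<close> \<open>z \<notin> S\<close> \<open>b \<notin> S\<close> \<open>t a \<notin> S\<close> z(2)]
  show False using infinite_B \<open>infinite (t ` A)\<close> unfolding S_def component_b component_t_a by blast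
qed

theorem translation_with_level_function: "\<exists>h. (\<forall>v. h (t v) = h v + 1) \<and> finite {v. h v = (0::int)}"
proof -
  obtain h :: "'a \<Rightarrow> int" where h: "\<And>v. h (t v) = h v + 1" "{v. h v = 0} \<subseteq> A - t ` A"
    using level_function_exists[OF bij_t t_A escapes_A enters_A] by blast
  have "A - t ` A \<subseteq> t ` K \<union> (A \<inter> t ` B)" using image_covers[OF bij_t] by blast
  then have "finite (A - t ` A)" using finite_K finite_A_inter_t_B
    by (meson finite_UnI finite_imageI finite_subset)
  with h show ?thesis using finite_subset by blast
qed

end

context two_ended_cut
begin

lemma cut_translation_exists:
  assumes "quasi_transitive E"
  shows "\<exists>a' b' t. cut_translation E K a' b' t"
proof -
  obtain g where g: "g \<in> automorphisms E" "g ` K \<subseteq> A"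
    using automorphism_into_component[OF assms finite_K infinite_A] by blast
  obtain g' where g': "g' \<in> automorphisms E" "g' ` K \<subseteq> B"
    using automorphism_into_component[OF assms finite_K infinite_B] by blast
  interpret swapped: two_ended_cut E K b a by (rule two_ended_cut_swap)
  consider "g ` A \<subseteq> A" | "g' ` B \<subseteq> B" | "g ` B \<subseteq> A" "g' ` A \<subseteq> B"
    using automorphism_side_cases[OF g] swapped.automorphism_side_cases[OF g'] by blast
  then show ?thesis
  proof cases
    case 1
    with g have "cut_translation E K a b g" by unfold_locales
    then show ?thesis by blast
  next
    case 2
    with g' have "cut_translation E K b a g'" by unfold_locales
    then show ?thesis by blast
  next
    case 3
    then have "(g \<circ> g') ` A \<subseteq> A" "(g \<circ> g') ` K \<subseteq> A"
      unfolding image_comp[symmetric] using g'(2) by blast+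
    with g g' have "cut_translation E K a b (g \<circ> g')"
      by unfold_locales (simp add: comp_automorphism)
    then show ?thesis by blast
  qed
qed

end

context two_ended_graph
begin

theorem translation_exists:
  assumes "quasi_transitive E"
  shows "\<exists>t h. t \<in> automorphisms E \<and> (\<forall>v. h (t v) = h v + 1) \<and> finite {v. h v = (0::int)}"
proof -
  obtain K a b where "two_ended_cut E K a b" using two_ended_cut_exists by blast
  then obtain a' b' t where "cut_translation E K a' b' t"
    using two_ended_cut.cut_translation_exists[OF _ assms] by blast
  then interpret cut_translation E K a' b' t .
  show ?thesis using t_automorphism translation_with_level_function by blast
qed

end

theorem theorem5p4:
  fixes E :: "'a \<Rightarrow> 'a \<Rightarrow> bool"
  assumes "simple_graph E"
    and "connected_graph E"
    and "locally_finite E"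
    and "quasi_transitive E"
    and "card (ends E) = 2"
  shows "\<exists>c. proper_coloring E c \<and> range c \<subseteq> {..<chromatic_number E} \<and> periodic_coloring E c"
proof -
  interpret two_ended_graph E
    using assms by unfold_locales
  obtain t and h :: "'a \<Rightarrow> int"
    where "t \<in> automorphisms E" "\<And>v. h (t v) = h v + 1" "finite {v. h v = 0}"
    using translation_exists[OF assms(4)] by blast
  then interpret translation E t h
    by unfold_locales
  show ?thesis by (rule periodic_chromatic_coloring_exists)
qed

end
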